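(* Fix $n$ and $r$ with $0\le r<\lfloor n/2\rfloor$, and let $a=\lfloor n/2\rfloor$. For any prime power $q$, any nontrivial additive character $\psi$ of $\mathbb F_q$ and any rank-one matrix $T\in M_{a,n-a}(\mathbb F_q)$, the number $$\widehat 1_{\mathcal O_r}(T)=\sum_{A\in\mathcal O_r}\psi(\mathrm{trace}(T^tA))$$ is a positive integer, and as $q\to\infty$, $$\widehat 1_{\mathcal O_r}(T)=\left(\frac1{q^r}+o\!\left(\frac1{q^r}\right)\right)\#(\mathcal O_r).$$
   Context: $\mathcal O_r\subset M_{a,n-a}(\mathbb F_q)$ is the set of $a\times(n-a)$ matrices of rank $r$. *)

theory Defs
  imports "HOL-Algebra.Ring" Complex_Main
begin

text \<open>Finite fields are represented as HOL-Algebra field records whose carrier lives in nat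
(every finite field is isomorphic to such a one), so that the statement can quantify over all
finite fields at once (needed for the asymptotics q \<rightarrow> \<infinity>).\<close>

definition matrices :: "nat ring \<Rightarrow> nat \<Rightarrow> nat \<Rightarrow> (nat \<Rightarrow> nat \<Rightarrow> nat) set" where
  "matrices F a m = {A. (\<forall>i<a. \<forall>j<m. A i j \<in> carrier F) \<and>
                        (\<forall>i j. \<not> (i < a \<and> j < m) \<longrightarrow> A i j = 0)}"

definition lin_indep_cols :: "nat ring \<Rightarrow> nat \<Rightarrow> (nat \<Rightarrow> nat \<Rightarrow> nat) \<Rightarrow> nat set \<Rightarrow> bool" where
  "lin_indep_cols F a A S \<longleftrightarrow>
     (\<forall>c \<in> S \<rightarrow> carrier F.
        (\<forall>i<a. (\<Oplus>\<^bsub>F\<^esub> j\<in>S. c j \<otimes>\<^bsub>F\<^esub> A i j) = \<zero>\<^bsub>F\<^esub>) \<longrightarrow> (\<forall>j\<in>S. c j = \<zero>\<^bsub>F\<^esub>))"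

definition mat_rank :: "nat ring \<Rightarrow> nat \<Rightarrow> nat \<Rightarrow> (nat \<Rightarrow> nat \<Rightarrow> nat) \<Rightarrow> nat" where
  "mat_rank F a m A = Max {card S | S. S \<subseteq> {..<m} \<and> lin_indep_cols F a A S}"

definition rank_orbit :: "nat ring \<Rightarrow> nat \<Rightarrow> nat \<Rightarrow> nat \<Rightarrow> (nat \<Rightarrow> nat \<Rightarrow> nat) set" where
  "rank_orbit F a m r = {A \<in> matrices F a m. mat_rank F a m A = r}"

definition nontriv_add_char :: "nat ring \<Rightarrow> (nat \<Rightarrow> complex) \<Rightarrow> bool" where
  "nontriv_add_char F \<psi> \<longleftrightarrow>
     (\<forall>x\<in>carrier F. cmod (\<psi> x) = 1) \<and>
     (\<forall>x\<in>carrier F. \<forall>y\<in>carrier F. \<psi> (x \<oplus>\<^bsub>F\<^esub> y) = \<psi> x * \<psi> y) \<and>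
     (\<exists>x\<in>carrier F. \<psi> x \<noteq> 1)"

definition trace_tA :: "nat ring \<Rightarrow> nat \<Rightarrow> nat \<Rightarrow> (nat \<Rightarrow> nat \<Rightarrow> nat) \<Rightarrow> (nat \<Rightarrow> nat \<Rightarrow> nat) \<Rightarrow> nat" where
  "trace_tA F a m T A = (\<Oplus>\<^bsub>F\<^esub> i\<in>{..<a}. \<Oplus>\<^bsub>F\<^esub> j\<in>{..<m}. T i j \<otimes>\<^bsub>F\<^esub> A i j)"

definition fourier_orbit ::
  "nat ring \<Rightarrow> (nat \<Rightarrow> complex) \<Rightarrow> nat \<Rightarrow> nat \<Rightarrow> nat \<Rightarrow> (nat \<Rightarrow> nat \<Rightarrow> nat) \<Rightarrow> complex" where
  "fourier_orbit F \<psi> a m r T = (\<Sum>A\<in>rank_orbit F a m r. \<psi> (trace_tA F a m T A))"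

end

theory Submission
  imports Defs "HOL-Library.Landau_Symbols" "HOL-Library.FuncSet"
begin

text \<open>
Write the rank-one matrix as T = u v^t with u \<noteq> 0 and v_k \<noteq> 0, so that trace(T^t A) = u \<cdot> (A v).
View A as the family of its columns and split off the column A_k. For fixed remaining columns,
spanning S, the substitution y = v_k A_k + \<Sum>_{j\<noteq>k} v_j A_j of the free column is a bijection of F^a
which does not change the span of all columns, so the inner sum is a sum of \<psi>(u \<cdot> y) over y \<in> F^a
weighted according to the dimension of S + F y. As y \<mapsto> \<psi>(u \<cdot> y) sums to zero over every subspace
not contained in perp u, the inner sum vanishes unless S \<subseteq> perp u, and then it equals
q^r [dim S = r] - q^(r-1) [dim S = r - 1]. Counting the families in perp u \<cong> F^(a-1) by the
dimension of their span gives the Fourier coefficient q^r N(a-1, m-1, r) - q^(r-1) N(a-1, m-1, r-1),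
where N(d, m, r) = [m r]_q \<Prod>_{i<r} (q^d - q^i) is the number of m-tuples in F^d of rank r; likewise
#O_r = N(a, m, r). The first term exceeds the second, and as polynomials in q the first term and
N(a, m, r) / q^r have the same leading monomial, while the second term has smaller degree.
\<close>

section \<open>Gaussian binomials and tuples of given rank\<close>

text \<open>\<open>qbinom q n r\<close> is the Gaussian binomial \<open>[n r]\<^sub>q\<close> (by the \<open>q\<close>-Pascal rule), \<open>qframes q d r\<close>
counts linearly independent \<open>r\<close>-tuples in \<open>F\<^sub>q\<^sup>d\<close>, and \<open>rank_tuples q d m r\<close> counts the
\<open>m\<close>-tuples in \<open>F\<^sub>q\<^sup>d\<close> spanning a subspace of dimension \<open>r\<close> (\<open>card_families_rank\<close>).\<close>

fun qbinom :: "nat \<Rightarrow> nat \<Rightarrow> nat \<Rightarrow> nat" where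
  "qbinom q 0 r = (if r = 0 then 1 else 0)"
| "qbinom q (Suc n) 0 = 1"
| "qbinom q (Suc n) (Suc r) = q ^ Suc r * qbinom q n (Suc r) + qbinom q n r"

definition qframes :: "nat \<Rightarrow> nat \<Rightarrow> nat \<Rightarrow> nat" where
  "qframes q d r = (\<Prod>i<r. q ^ d - q ^ i)"

definition rank_tuples :: "nat \<Rightarrow> nat \<Rightarrow> nat \<Rightarrow> nat \<Rightarrow> nat" where
  "rank_tuples q d m r = qbinom q m r * qframes q d r"

lemma qbinom_0_right [simp]: "qbinom q n 0 = 1"
  by (cases n) auto

lemma qframes_0 [simp]: "qframes q d 0 = 1"
  by (simp add: qframes_def)

lemma qframes_Suc: "qframes q d (Suc r) = qframes q d r * (q ^ d - q ^ r)"
  by (simp add: qframes_def)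

lemma qbinom_eq_0: "n < r \<Longrightarrow> qbinom q n r = 0"
  by (induction q n r rule: qbinom.induct) auto

lemma qbinom_diag [simp]: "qbinom q n n = 1"
  by (induction n) (auto simp: qbinom_eq_0)

lemma qbinom_pos: "r \<le> n \<Longrightarrow> 0 < qbinom q n r"
  by (induction q n r rule: qbinom.induct) auto

lemma qframes_pos: "2 \<le> q \<Longrightarrow> r \<le> d \<Longrightarrow> 0 < qframes q d r"
  unfolding qframes_def by (intro prod_pos) (auto intro: power_strict_increasing)

lemma qbinom_less: "2 \<le> q \<Longrightarrow> r < n \<Longrightarrow> qbinom q n r < q ^ Suc r * qbinom q n (Suc r)"
proof (induction q n r rule: qbinom.induct)
  case (2 q n)
  have "1 * 1 < q * qbinom q (Suc n) 1"
    using 2 qbinom_pos[of 1 "Suc n" q] by (intro mult_less_le_imp_less) auto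
  then show ?case by simp
next
  case (3 q n r)
  have "qbinom q (Suc n) (Suc r) < 2 * (q ^ Suc r * qbinom q n (Suc r))"
    using 3 by simp
  also have "\<dots> \<le> q * (q ^ Suc r * qbinom q n (Suc r))"
    using "3.prems"(1) by (rule mult_le_mono1)
  also have "\<dots> \<le> q ^ Suc (Suc r) * qbinom q (Suc n) (Suc (Suc r))"
    by simp
  finally show ?case .
qed simp

lemma rank_tuples_0 [simp]: "rank_tuples q d 0 r = (if r = 0 then 1 else 0)"
  by (simp add: rank_tuples_def)

lemma rank_tuples_Suc:
  "rank_tuples q d (Suc m) r =
     q ^ r * rank_tuples q d m r + (case r of 0 \<Rightarrow> 0 | Suc s \<Rightarrow> (q ^ d - q ^ s) * rank_tuples q d m s)"
  by (cases r) (simp_all add: rank_tuples_def qframes_Suc distrib_left distrib_right mult_ac)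

text \<open>The Fourier coefficient of the rank-\<open>r\<close> indicator at a rank-one \<open>(d+1) \<times> (m+1)\<close> matrix
(\<open>fourier_orbit_rank_one\<close>). The subtraction never truncates, by \<open>rank_one_transform_pos\<close>.\<close>

definition rank_one_transform :: "nat \<Rightarrow> nat \<Rightarrow> nat \<Rightarrow> nat \<Rightarrow> nat" where
  "rank_one_transform q d m r =
     q ^ r * rank_tuples q d m r - (case r of 0 \<Rightarrow> 0 | Suc s \<Rightarrow> q ^ s * rank_tuples q d m s)"

lemma rank_tuples_step_less:
  assumes q: "2 \<le> q" and "Suc s \<le> d" "d \<le> m"
  shows "q ^ s * rank_tuples q d m s < q ^ Suc s * rank_tuples q d m (Suc s)"
proof -
  have "2 * q ^ s \<le> q ^ Suc s"
    using q by simp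
  also have "\<dots> \<le> q ^ d"
    using assms by (intro power_increasing) auto
  finally have "q ^ s \<le> q ^ d - q ^ s"
    by linarith
  then have frames: "q ^ s * qframes q d s \<le> qframes q d (Suc s)"
    by (simp add: qframes_Suc mult.commute)
  have "q ^ s * rank_tuples q d m s < q ^ s * (q ^ Suc s * qbinom q m (Suc s)) * qframes q d s"
    using qbinom_less[OF q, of s m] qframes_pos[OF q, of s d] assms
    by (simp add: rank_tuples_def)
  also have "\<dots> \<le> q ^ Suc s * rank_tuples q d m (Suc s)"
    using frames by (simp add: rank_tuples_def)
  finally show ?thesis .
qed

lemma rank_one_transform_pos:
  assumes "2 \<le> q" "r \<le> d" "d \<le> m"
  shows "0 < rank_one_transform q d m r"
  using assms rank_tuples_step_less[OF assms(1)] qbinom_pos[of 0 m q] qframes_pos[of q 0 d]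
  by (cases r) (auto simp: rank_one_transform_def rank_tuples_def)

lemma of_nat_rank_one_transform:
  assumes "2 \<le> q" "r \<le> d" "d \<le> m"
  shows "of_nat (rank_one_transform q d m r) = (of_nat (q ^ r * rank_tuples q d m r) :: 'a :: ring_1) -
           of_nat (case r of 0 \<Rightarrow> 0 | Suc s \<Rightarrow> q ^ s * rank_tuples q d m s)"
proof (cases r)
  case (Suc s)
  then have "q ^ s * rank_tuples q d m s \<le> q ^ r * rank_tuples q d m r"
    using rank_tuples_step_less[OF assms(1), of s d m] assms by simp
  then show ?thesis
    using Suc by (simp add: rank_one_transform_def of_nat_diff)
qed (simp add: rank_one_transform_def)

section \<open>Asymptotics as \<open>q \<rightarrow> \<infinity>\<close>\<close>

lemma power_smallo_power:
  assumes "k < l"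
  shows "(\<lambda>q::nat. real q ^ k) \<in> o(\<lambda>q. real q ^ l)"
proof (rule smalloI_tendsto)
  have "((\<lambda>q::nat. inverse (real q) ^ (l - k)) \<longlongrightarrow> 0 ^ (l - k)) sequentially"
    by (intro tendsto_power lim_inverse_n)
  then have "((\<lambda>q::nat. inverse (real q) ^ (l - k)) \<longlongrightarrow> 0) sequentially"
    using assms by (simp add: zero_power)
  moreover have "eventually (\<lambda>q. inverse (real q) ^ (l - k) = real q ^ k / real q ^ l) sequentially"
    using eventually_gt_at_top[of 0]
    by eventually_elim (use assms in \<open>simp add: power_diff power_inverse field_simps\<close>)
  ultimately show "((\<lambda>q. real q ^ k / real q ^ l) \<longlongrightarrow> 0) sequentially"
    by (rule Lim_transform_eventually)
  show "eventually (\<lambda>q. real q ^ l \<noteq> 0) sequentially"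
    using eventually_gt_at_top[of 0] by eventually_elim simp
qed

lemma smallo_power_if_asymp_equiv:
  assumes "f \<sim>[sequentially] (\<lambda>q. real q ^ k)" "k < l"
  shows "f \<in> o(\<lambda>q. real q ^ l)"
  using landau_o.big_small_trans[OF asymp_equiv_imp_bigo[OF assms(1)] power_smallo_power[OF assms(2)]] .

lemma qframes_asymp_equiv:
  "r \<le> d \<Longrightarrow> (\<lambda>q. real (qframes q d r)) \<sim>[sequentially] (\<lambda>q. real q ^ (d * r))"
proof (induction r)
  case (Suc r)
  have "(\<lambda>q. real q ^ d + - (real q ^ r)) \<sim>[sequentially] (\<lambda>q. real q ^ d)"
    using Suc.prems by (subst asymp_equiv_add_right) (auto intro: power_smallo_power)
  with Suc have "(\<lambda>q. real (qframes q d r) * (real q ^ d + - (real q ^ r)))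
                   \<sim>[sequentially] (\<lambda>q. real q ^ (d * r) * real q ^ d)"
    by (intro asymp_equiv_mult) auto
  moreover have "eventually (\<lambda>q. real (qframes q d r) * (real q ^ d + - (real q ^ r)) =
                                  real (qframes q d (Suc r))) sequentially"
    using eventually_gt_at_top[of 0]
    by eventually_elim (use Suc.prems in \<open>simp add: qframes_Suc of_nat_diff power_increasing\<close>)
  ultimately show ?case
    by (rule asymp_equiv_transfer) (simp add: power_add)
qed simp

lemma qbinom_asymp_equiv:
  "r \<le> n \<Longrightarrow> (\<lambda>q. real (qbinom q n r)) \<sim>[sequentially] (\<lambda>q. real q ^ (r * (n - r)))"
proof (induction n arbitrary: r)
  case (Suc n)
  consider "r = 0" | "r = Suc n" | s where "r = Suc s" "s < n"
    using Suc.prems by (cases r) (auto simp: le_less)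
  then show ?case
  proof cases
    case 3
    obtain t where "n = Suc s + t"
      using 3 less_iff_Suc_add by blast
    then have exp: "Suc s + Suc s * (n - Suc s) = Suc s * (n - s)"
      by simp
    have "(\<lambda>q. real q ^ Suc s * real (qbinom q n (Suc s)))
            \<sim>[sequentially] (\<lambda>q. real q ^ Suc s * real q ^ (Suc s * (n - Suc s)))"
      using 3 by (intro asymp_equiv_mult Suc.IH) auto
    also have "(\<lambda>q. real q ^ Suc s * real q ^ (Suc s * (n - Suc s))) = (\<lambda>q. real q ^ (Suc s * (n - s)))"
      by (simp only: power_add[symmetric] exp)
    finally have main: "(\<lambda>q. real q ^ Suc s * real (qbinom q n (Suc s)))
            \<sim>[sequentially] (\<lambda>q. real q ^ (Suc s * (n - s)))" .
    have "(\<lambda>q. real (qbinom q n s)) \<in> o(\<lambda>q. real q ^ (Suc s * (n - s)))"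
      using 3 by (intro smallo_power_if_asymp_equiv[OF Suc.IH]) auto
    then show ?thesis
      using main 3 by (simp add: asymp_equiv_add_right)
  qed simp_all
qed simp

lemma rank_tuples_asymp_equiv:
  "r \<le> d \<Longrightarrow> r \<le> m \<Longrightarrow>
     (\<lambda>q. real (rank_tuples q d m r)) \<sim>[sequentially] (\<lambda>q. real q ^ (r * (m - r) + d * r))"
  unfolding rank_tuples_def of_nat_mult power_add
  by (intro asymp_equiv_mult qbinom_asymp_equiv qframes_asymp_equiv)

lemma leading_term_asymp_equiv:
  assumes "r \<le> d" "d \<le> m"
  shows "(\<lambda>q. real q ^ r * real (rank_tuples q d m r)) \<sim>[sequentially] (\<lambda>q. real q ^ (r + r * (m - r) + d * r))"
proof -
  have "(\<lambda>q. real q ^ r * real (rank_tuples q d m r))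
          \<sim>[sequentially] (\<lambda>q. real q ^ r * real q ^ (r * (m - r) + d * r))"
    using assms by (intro asymp_equiv_mult rank_tuples_asymp_equiv) auto
  then show ?thesis
    by (simp add: power_add mult.assoc)
qed

lemma correction_term_smallo:
  assumes "r \<le> d" "d \<le> m"
  shows "(\<lambda>q. real (case r of 0 \<Rightarrow> 0 | Suc s \<Rightarrow> q ^ s * rank_tuples q d m s))
           \<in> o(\<lambda>q. real q ^ (r + r * (m - r) + d * r))"
proof (cases r)
  case (Suc s)
  have "(\<lambda>q. real q ^ s * real (rank_tuples q d m s))
          \<sim>[sequentially] (\<lambda>q. real q ^ (s + s * (m - s) + d * s))"
    using assms Suc by (intro leading_term_asymp_equiv) auto
  moreover obtain i j where "d = Suc s + i" "m = d + j"
    using assms Suc by (metis le_add_diff_inverse)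
  then have "s + s * (m - s) + d * s < r + r * (m - r) + d * r"
    using Suc by (simp add: algebra_simps)
  ultimately have "(\<lambda>q. real q ^ s * real (rank_tuples q d m s)) \<in> o(\<lambda>q. real q ^ (r + r * (m - r) + d * r))"
    by (rule smallo_power_if_asymp_equiv)
  then show ?thesis
    using Suc by simp
qed simp

lemma rank_tuples_Suc_Suc_asymp_equiv:
  assumes "r \<le> d" "d \<le> m"
  shows "(\<lambda>q. real (rank_tuples q (Suc d) (Suc m) r) / real q ^ r)
           \<sim>[sequentially] (\<lambda>q. real q ^ (r + r * (m - r) + d * r))"
proof -
  have tuples: "(\<lambda>q. real (rank_tuples q (Suc d) (Suc m) r) / real q ^ r) \<sim>[sequentially]
          (\<lambda>q. real q ^ (r * (Suc m - r) + Suc d * r) / real q ^ r)"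
    using assms by (intro asymp_equiv_divide rank_tuples_asymp_equiv) auto
  have exponent: "eventually (\<lambda>q. real q ^ (r * (Suc m - r) + Suc d * r) / real q ^ r =
                                  real q ^ (r + r * (m - r) + d * r)) sequentially"
    using eventually_gt_at_top[of 0]
    by eventually_elim (use assms in \<open>simp add: Suc_diff_le power_add algebra_simps\<close>)
  show ?thesis
    by (rule asymp_equiv_transfer[OF tuples _ exponent]) simp
qed

lemma rank_one_transform_asymp_equiv:
  assumes "r \<le> d" "d \<le> m"
  shows "(\<lambda>q. real (rank_one_transform q d m r))
           \<sim>[sequentially] (\<lambda>q. real (rank_tuples q (Suc d) (Suc m) r) / real q ^ r)"
proof -
  have "(\<lambda>q. real q ^ r * real (rank_tuples q d m r) +
            - real (case r of 0 \<Rightarrow> 0 | Suc s \<Rightarrow> q ^ s * rank_tuples q d m s))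
          \<sim>[sequentially] (\<lambda>q. real q ^ (r + r * (m - r) + d * r))"
    using correction_term_smallo[OF assms] leading_term_asymp_equiv[OF assms]
    by (intro asymp_equiv_add_right[THEN iffD2]) simp_all
  moreover have "eventually (\<lambda>q. real q ^ r * real (rank_tuples q d m r) +
                   - real (case r of 0 \<Rightarrow> 0 | Suc s \<Rightarrow> q ^ s * rank_tuples q d m s) =
                   real (rank_one_transform q d m r)) sequentially"
    using eventually_ge_at_top[of 2]
    by eventually_elim (use assms in \<open>simp add: of_nat_rank_one_transform\<close>)
  ultimately have "(\<lambda>q. real (rank_one_transform q d m r))
                     \<sim>[sequentially] (\<lambda>q. real q ^ (r + r * (m - r) + d * r))"
    by (rule asymp_equiv_transfer) simp
  from asymp_equiv_trans[OF this asymp_equiv_symI[OF rank_tuples_Suc_Suc_asymp_equiv[OF assms]]]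
  show ?thesis .
qed

lemma rank_one_transform_rel_error:
  assumes "r \<le> d" "d \<le> m" "0 < \<epsilon>"
  obtains Q where "\<And>q. Q \<le> q \<Longrightarrow>
    \<bar>real (rank_one_transform q d m r) - real (rank_tuples q (Suc d) (Suc m) r) / real q ^ r\<bar>
      \<le> \<epsilon> * (real (rank_tuples q (Suc d) (Suc m) r) / real q ^ r)"
proof -
  have "(\<lambda>q. real (rank_one_transform q d m r) - real (rank_tuples q (Suc d) (Suc m) r) / real q ^ r)
          \<in> o(\<lambda>q. real (rank_tuples q (Suc d) (Suc m) r) / real q ^ r)"
    using rank_one_transform_asymp_equiv[OF assms(1,2)] by (simp add: asymp_equiv_altdef)
  then have "eventually (\<lambda>q. \<bar>real (rank_one_transform q d m r) - real (rank_tuples q (Suc d) (Suc m) r) / real q ^ r\<bar>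
          \<le> \<epsilon> * \<bar>real (rank_tuples q (Suc d) (Suc m) r) / real q ^ r\<bar>) sequentially"
    using assms(3) by (auto dest: landau_o.smallD)
  then show ?thesis
    using that unfolding eventually_sequentially by auto
qed

section \<open>Coordinate spaces over a finite field\<close>

lemma card_filter_eq_sum: "finite P \<Longrightarrow> card {x \<in> P. Q x} = (\<Sum>x\<in>P. if Q x then 1 else 0)"
  by (simp add: sum.If_cases Int_def)

lemma sum_if_const: "finite P \<Longrightarrow> (\<Sum>x\<in>P. if Q x then c else 0) = c * card {x \<in> P. Q x}"
  by (simp add: card_filter_eq_sum sum_distrib_left if_distrib cong: if_cong)

lemma sum_PiE_insert:
  assumes "k \<notin> J"
  shows "(\<Sum>A\<in>insert k J \<rightarrow>\<^sub>E W. f A) = (\<Sum>B\<in>J \<rightarrow>\<^sub>E W. \<Sum>w\<in>W. f (B(k := w)))"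
proof -
  have "(\<Sum>A\<in>insert k J \<rightarrow>\<^sub>E W. f A) = (\<Sum>(w, B)\<in>W \<times> (J \<rightarrow>\<^sub>E W). f (B(k := w)))"
    using assms
    by (intro sum.reindex_bij_witness[of _ "\<lambda>(w, B). B(k := w)" "\<lambda>A. (A k, A(k := undefined))"])
       (auto simp: PiE_def extensional_def)
  also have "\<dots> = (\<Sum>B\<in>J \<rightarrow>\<^sub>E W. \<Sum>w\<in>W. f (B(k := w)))"
    by (subst sum.cartesian_product[symmetric]) (rule sum.swap)
  finally show ?thesis .
qed

locale finite_coord_space = field F for F :: "nat ring" (structure) +
  fixes a :: nat
  assumes finite_carrier: "finite (carrier F)"
begin

abbreviation q :: nat where "q \<equiv> card (carrier F)"

definition vecs :: "(nat \<Rightarrow> nat) set" where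
  "vecs = {x. (\<forall>i<a. x i \<in> carrier F) \<and> (\<forall>i. a \<le> i \<longrightarrow> x i = 0)}"

definition vzero :: "nat \<Rightarrow> nat" where
  "vzero = (\<lambda>i. if i < a then \<zero> else 0)"

definition vadd :: "(nat \<Rightarrow> nat) \<Rightarrow> (nat \<Rightarrow> nat) \<Rightarrow> nat \<Rightarrow> nat" where
  "vadd x y = (\<lambda>i. if i < a then x i \<oplus> y i else 0)"

definition vscale :: "nat \<Rightarrow> (nat \<Rightarrow> nat) \<Rightarrow> nat \<Rightarrow> nat" where
  "vscale c x = (\<lambda>i. if i < a then c \<otimes> x i else 0)"

definition lincomb :: "nat set \<Rightarrow> (nat \<Rightarrow> nat) \<Rightarrow> (nat \<Rightarrow> nat \<Rightarrow> nat) \<Rightarrow> nat \<Rightarrow> nat" where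
  "lincomb J c A = (\<lambda>i. if i < a then (\<Oplus>j\<in>J. c j \<otimes> A j i) else 0)"

definition subspace :: "(nat \<Rightarrow> nat) set \<Rightarrow> bool" where
  "subspace W \<longleftrightarrow> W \<subseteq> vecs \<and> vzero \<in> W \<and> (\<forall>x\<in>W. \<forall>y\<in>W. vadd x y \<in> W) \<and>
     (\<forall>c\<in>carrier F. \<forall>x\<in>W. vscale c x \<in> W)"

definition span :: "nat set \<Rightarrow> (nat \<Rightarrow> nat \<Rightarrow> nat) \<Rightarrow> (nat \<Rightarrow> nat) set" where
  "span J A = {lincomb J c A | c. c \<in> J \<rightarrow> carrier F}"

definition indep :: "nat set \<Rightarrow> (nat \<Rightarrow> nat \<Rightarrow> nat) \<Rightarrow> bool" where
  "indep J A \<longleftrightarrow> (\<forall>c\<in>J \<rightarrow> carrier F. lincomb J c A = vzero \<longrightarrow> (\<forall>j\<in>J. c j = \<zero>))"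

definition adjoin :: "(nat \<Rightarrow> nat) set \<Rightarrow> (nat \<Rightarrow> nat) \<Rightarrow> (nat \<Rightarrow> nat) set" where
  "adjoin S w = {vadd x (vscale c w) | x c. x \<in> S \<and> c \<in> carrier F}"

lemma vec_eqI:
  assumes "x \<in> vecs" "y \<in> vecs" "\<And>i. i < a \<Longrightarrow> x i = y i"
  shows "x = y"
proof
  fix i show "x i = y i"
    using assms by (cases "i < a") (auto simp: vecs_def)
qed

lemma vecsD: "x \<in> vecs \<Longrightarrow> i < a \<Longrightarrow> x i \<in> carrier F"
  unfolding vecs_def by auto

lemma vzero_vecs [simp]: "vzero \<in> vecs"
  unfolding vecs_def vzero_def by auto

lemma vadd_vecs [simp]: "x \<in> vecs \<Longrightarrow> y \<in> vecs \<Longrightarrow> vadd x y \<in> vecs"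
  unfolding vecs_def vadd_def by auto

lemma vscale_vecs [simp]: "c \<in> carrier F \<Longrightarrow> x \<in> vecs \<Longrightarrow> vscale c x \<in> vecs"
  unfolding vecs_def vscale_def by auto

lemma lincomb_vecs [simp]:
  "c \<in> J \<rightarrow> carrier F \<Longrightarrow> (\<And>j. j \<in> J \<Longrightarrow> A j \<in> vecs) \<Longrightarrow> lincomb J c A \<in> vecs"
  unfolding vecs_def lincomb_def by (auto intro!: finsum_closed simp: Pi_def)

lemma vzero_apply: "i < a \<Longrightarrow> vzero i = \<zero>"
  and vadd_apply: "i < a \<Longrightarrow> vadd x y i = x i \<oplus> y i"
  and vscale_apply: "i < a \<Longrightarrow> vscale c x i = c \<otimes> x i"
  by (simp_all add: vzero_def vadd_def vscale_def)

lemma lincomb_apply: "i < a \<Longrightarrow> lincomb J c A i = (\<Oplus>j\<in>J. c j \<otimes> A j i)"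
  by (simp add: lincomb_def)

lemmas vec_apply = vzero_apply vadd_apply vscale_apply lincomb_apply

lemma vscale_zero: "x \<in> vecs \<Longrightarrow> vscale \<zero> x = vzero"
  and vscale_one: "x \<in> vecs \<Longrightarrow> vscale \<one> x = x"
  and vscale_vzero: "c \<in> carrier F \<Longrightarrow> vscale c vzero = vzero"
  and vadd_vzero_left: "x \<in> vecs \<Longrightarrow> vadd vzero x = x"
  and vadd_vzero_right: "x \<in> vecs \<Longrightarrow> vadd x vzero = x"
  by (auto intro!: vec_eqI simp: vec_apply vecsD)

lemma lincomb_empty [simp]: "lincomb {} c A = vzero"
  unfolding lincomb_def vzero_def by auto

lemma lincomb_insert:
  assumes "finite J" "k \<notin> J" "c \<in> insert k J \<rightarrow> carrier F" "\<And>j. j \<in> insert k J \<Longrightarrow> A j \<in> vecs"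
  shows "lincomb (insert k J) c A = vadd (vscale (c k) (A k)) (lincomb J c A)"
proof
  fix i show "lincomb (insert k J) c A i = vadd (vscale (c k) (A k)) (lincomb J c A) i"
  proof (cases "i < a")
    case True
    have "(\<lambda>j. c j \<otimes> A j i) \<in> J \<rightarrow> carrier F" "c k \<otimes> A k i \<in> carrier F"
      using assms True by (auto simp: Pi_def vecsD)
    then show ?thesis
      using True assms by (simp add: vec_apply finsum_insert)
  qed (simp add: lincomb_def vadd_def)
qed

lemma lincomb_cong:
  assumes "\<And>j. j \<in> J \<Longrightarrow> c j = d j" "\<And>j. j \<in> J \<Longrightarrow> A j = B j"
    "c \<in> J \<rightarrow> carrier F" "\<And>j. j \<in> J \<Longrightarrow> A j \<in> vecs"
  shows "lincomb J c A = lincomb J d B"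
proof
  fix i show "lincomb J c A i = lincomb J d B i"
  proof (cases "i < a")
    case True
    have "(\<lambda>j. d j \<otimes> B j i) \<in> J \<rightarrow> carrier F"
      using assms True by (auto simp: Pi_def vecsD)
    then show ?thesis
      using True assms by (auto simp: lincomb_def intro!: finsum_cong')
  qed (simp add: lincomb_def)
qed

lemma lincomb_add:
  assumes "c \<in> J \<rightarrow> carrier F" "d \<in> J \<rightarrow> carrier F" "\<And>j. j \<in> J \<Longrightarrow> A j \<in> vecs"
  shows "vadd (lincomb J c A) (lincomb J d A) = lincomb J (\<lambda>j. c j \<oplus> d j) A"
proof (rule vec_eqI)
  fix i assume i: "i < a"
  have "(\<lambda>j. c j \<otimes> A j i) \<in> J \<rightarrow> carrier F" "(\<lambda>j. d j \<otimes> A j i) \<in> J \<rightarrow> carrier F"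
    using assms i by (auto simp: Pi_def vecsD)
  moreover have "(\<Oplus>j\<in>J. (c j \<oplus> d j) \<otimes> A j i) = (\<Oplus>j\<in>J. c j \<otimes> A j i \<oplus> d j \<otimes> A j i)"
    using assms i by (intro finsum_cong') (auto simp: Pi_def vecsD l_distr)
  ultimately show "vadd (lincomb J c A) (lincomb J d A) i = lincomb J (\<lambda>j. c j \<oplus> d j) A i"
    using i by (simp add: vec_apply finsum_addf)
qed (use assms in \<open>auto intro!: lincomb_vecs\<close>)

lemma lincomb_scale:
  assumes "finite J" "e \<in> carrier F" "c \<in> J \<rightarrow> carrier F" "\<And>j. j \<in> J \<Longrightarrow> A j \<in> vecs"
  shows "vscale e (lincomb J c A) = lincomb J (\<lambda>j. e \<otimes> c j) A"
proof (rule vec_eqI)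
  fix i assume i: "i < a"
  have "(\<lambda>j. c j \<otimes> A j i) \<in> J \<rightarrow> carrier F"
    using assms i by (auto simp: Pi_def vecsD)
  moreover have "(\<Oplus>j\<in>J. (e \<otimes> c j) \<otimes> A j i) = (\<Oplus>j\<in>J. e \<otimes> (c j \<otimes> A j i))"
    using assms i by (intro finsum_cong') (auto simp: Pi_def vecsD m_assoc)
  ultimately show "vscale e (lincomb J c A) i = lincomb J (\<lambda>j. e \<otimes> c j) A i"
    using i assms by (simp add: vec_apply finsum_rdistr)
qed (use assms in \<open>auto intro!: lincomb_vecs\<close>)

lemma lincomb_zero:
  assumes "\<And>j. j \<in> J \<Longrightarrow> A j \<in> vecs"
  shows "lincomb J (\<lambda>_. \<zero>) A = vzero"
proof (rule vec_eqI)
  fix i assume i: "i < a"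
  have "(\<Oplus>j\<in>J. \<zero> \<otimes> A j i) = (\<Oplus>j\<in>J. \<zero>)"
    using assms i by (intro finsum_cong') (auto simp: vecsD)
  then show "lincomb J (\<lambda>_. \<zero>) A i = vzero i"
    using i by (simp add: vec_apply)
qed (use assms in auto)

lemma lincomb_indicator:
  assumes "finite J" "l \<in> J" "\<And>j. j \<in> J \<Longrightarrow> A j \<in> vecs"
  shows "lincomb J (\<lambda>j. if j = l then \<one> else \<zero>) A = A l"
proof (rule vec_eqI)
  fix i assume i: "i < a"
  have "(\<Oplus>j\<in>J. (if j = l then \<one> else \<zero>) \<otimes> A j i) = (\<Oplus>j\<in>J. if l = j then A j i else \<zero>)"
    using assms i by (intro finsum_cong') (auto simp: vecsD)
  also have "\<dots> = A l i"
    using assms i by (intro finsum_singleton) (auto simp: vecsD)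
  finally show "lincomb J (\<lambda>j. if j = l then \<one> else \<zero>) A i = A l i"
    using i by (simp add: vec_apply)
qed (use assms in auto)

lemma subspaceD:
  assumes "subspace W"
  shows "W \<subseteq> vecs" "vzero \<in> W" "x \<in> W \<Longrightarrow> y \<in> W \<Longrightarrow> vadd x y \<in> W"
    "c \<in> carrier F \<Longrightarrow> x \<in> W \<Longrightarrow> vscale c x \<in> W"
  using assms unfolding subspace_def by auto

lemma subspace_vecs: "subspace vecs"
  unfolding subspace_def by auto

lemma subspace_vzero: "subspace {vzero}"
  unfolding subspace_def by (simp add: vadd_vzero_left vscale_vzero)

lemma lincomb_in_subspace:
  assumes "subspace W" "finite J" "c \<in> J \<rightarrow> carrier F" "\<And>j. j \<in> J \<Longrightarrow> A j \<in> W"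
  shows "lincomb J c A \<in> W"
  using assms(2-)
proof (induction J rule: finite_induct)
  case empty
  then show ?case using subspaceD[OF assms(1)] by simp
next
  case (insert k J)
  have "lincomb (insert k J) c A = vadd (vscale (c k) (A k)) (lincomb J c A)"
    using insert subspaceD(1)[OF assms(1)] by (intro lincomb_insert) auto
  then show ?case
    using insert subspaceD[OF assms(1)] by auto
qed

lemma span_base: "finite J \<Longrightarrow> l \<in> J \<Longrightarrow> (\<And>j. j \<in> J \<Longrightarrow> A j \<in> vecs) \<Longrightarrow> A l \<in> span J A"
  unfolding span_def using lincomb_indicator[of J l A, symmetric] by (auto simp: Pi_def)

lemma span_minimal:
  "subspace W \<Longrightarrow> finite J \<Longrightarrow> (\<And>j. j \<in> J \<Longrightarrow> A j \<in> W) \<Longrightarrow> span J A \<subseteq> W"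
  unfolding span_def using lincomb_in_subspace by auto

lemma subspace_span:
  assumes "finite J" "\<And>j. j \<in> J \<Longrightarrow> A j \<in> vecs"
  shows "subspace (span J A)"
  unfolding subspace_def
proof (intro conjI ballI)
  show "span J A \<subseteq> vecs"
    unfolding span_def using assms by auto
  show "vzero \<in> span J A"
    unfolding span_def using lincomb_zero[of J A] assms by (auto intro!: exI[of _ "\<lambda>_. \<zero>"])
next
  fix x y assume "x \<in> span J A" "y \<in> span J A"
  then obtain c d where "c \<in> J \<rightarrow> carrier F" "d \<in> J \<rightarrow> carrier F" "x = lincomb J c A" "y = lincomb J d A"
    unfolding span_def by auto
  then show "vadd x y \<in> span J A"
    unfolding span_def using lincomb_add[of c J d A] assms
    by (auto intro!: exI[of _ "\<lambda>j. c j \<oplus> d j"])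
next
  fix e x assume "e \<in> carrier F" "x \<in> span J A"
  then obtain c where "c \<in> J \<rightarrow> carrier F" "x = lincomb J c A"
    unfolding span_def by auto
  then show "vscale e x \<in> span J A"
    unfolding span_def using lincomb_scale[of J e c A] assms \<open>e \<in> carrier F\<close>
    by (auto intro!: exI[of _ "\<lambda>j. e \<otimes> c j"])
qed

lemma span_cong:
  "(\<And>j. j \<in> J \<Longrightarrow> A j = B j) \<Longrightarrow> (\<And>j. j \<in> J \<Longrightarrow> A j \<in> vecs) \<Longrightarrow> span J A = span J B"
  unfolding span_def using lincomb_cong by (metis (no_types, lifting))

lemma field_inv_closed: "x \<in> carrier F \<Longrightarrow> x \<noteq> \<zero> \<Longrightarrow> inv x \<in> carrier F"
  and field_l_inv: "x \<in> carrier F \<Longrightarrow> x \<noteq> \<zero> \<Longrightarrow> inv x \<otimes> x = \<one>"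
  and field_r_inv: "x \<in> carrier F \<Longrightarrow> x \<noteq> \<zero> \<Longrightarrow> x \<otimes> inv x = \<one>"
  by (simp_all add: field_Units)

lemma card_carrier_ge_2: "2 \<le> q"
proof -
  have "card {\<zero>, \<one>} \<le> q"
    using finite_carrier by (intro card_mono) auto
  then show ?thesis by simp
qed

lemma bij_betw_vecs_PiE: "bij_betw (\<lambda>x. restrict x {..<a}) vecs ({..<a} \<rightarrow>\<^sub>E carrier F)"
proof (rule bij_betwI[where g = "\<lambda>y i. if i < a then y i else 0"])
  show "(\<lambda>x. restrict x {..<a}) \<in> vecs \<rightarrow> {..<a} \<rightarrow>\<^sub>E carrier F"
    unfolding vecs_def by (simp add: Pi_def)
  show "(\<lambda>y i. if i < a then y i else 0) \<in> ({..<a} \<rightarrow>\<^sub>E carrier F) \<rightarrow> vecs"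
    unfolding vecs_def by (simp add: Pi_def PiE_def)
next
  fix x assume "x \<in> vecs"
  then show "(\<lambda>i. if i < a then restrict x {..<a} i else 0) = x"
    by (auto simp: vecs_def)
next
  fix y assume "y \<in> {..<a} \<rightarrow>\<^sub>E carrier F"
  then show "restrict (\<lambda>i. if i < a then y i else 0) {..<a} = y"
    by (auto simp: PiE_def extensional_def)
qed

lemma finite_vecs: "finite vecs"
  and card_vecs: "card vecs = q ^ a"
  using bij_betw_finite[OF bij_betw_vecs_PiE] bij_betw_same_card[OF bij_betw_vecs_PiE] finite_carrier
  by (simp_all add: finite_PiE card_PiE)

lemma finite_subspace: "subspace W \<Longrightarrow> finite W"
  using subspaceD(1) finite_vecs finite_subset by blast

lemma diff_eq_zero_iff: "x \<in> carrier F \<Longrightarrow> y \<in> carrier F \<Longrightarrow> x \<ominus> y = \<zero> \<longleftrightarrow> x = y"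
  by (metis a_minus_def add.inv_closed minus_equality r_neg)

lemma vadd_neg_self: "x \<in> vecs \<Longrightarrow> vadd x (vscale (\<ominus> \<one>) x) = vzero"
  by (rule vec_eqI) (auto simp: vec_apply vecsD l_minus r_neg)

lemma mem_subspace_if_vscale_mem:
  assumes S: "subspace S" and c: "c \<in> carrier F" "c \<noteq> \<zero>" and w: "w \<in> vecs"
    and cw: "vscale c w \<in> S"
  shows "w \<in> S"
proof -
  have "w = vscale (inv c) (vscale c w)"
    using c w field_inv_closed[OF c]
    by (intro vec_eqI) (auto simp: vec_apply vecsD field_l_inv m_assoc[symmetric])
  then show ?thesis
    using subspaceD(4)[OF S field_inv_closed[OF c] cw] by simp
qed

lemma subspace_adjoin:
  assumes S: "subspace S" and w: "w \<in> vecs"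
  shows "subspace (adjoin S w)"
  unfolding subspace_def
proof (intro conjI ballI)
  note S' = subspaceD[OF S]
  show "adjoin S w \<subseteq> vecs"
    unfolding adjoin_def using S' w by auto
  have "vzero = vadd vzero (vscale \<zero> w)"
    using w by (simp add: vscale_zero vadd_vzero_left)
  then show "vzero \<in> adjoin S w"
    unfolding adjoin_def using S' by blast
next
  fix x y assume "x \<in> adjoin S w" "y \<in> adjoin S w"
  then obtain x0 c y0 d where xy: "x0 \<in> S" "c \<in> carrier F" "y0 \<in> S" "d \<in> carrier F"
    "x = vadd x0 (vscale c w)" "y = vadd y0 (vscale d w)"
    unfolding adjoin_def by blast
  have "x0 \<in> vecs" "y0 \<in> vecs"
    using xy subspaceD(1)[OF S] by auto
  then have "vadd x y = vadd (vadd x0 y0) (vscale (c \<oplus> d) w)"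
    using xy w by (intro vec_eqI) (auto simp: vec_apply vecsD l_distr a_ac)
  then show "vadd x y \<in> adjoin S w"
    unfolding adjoin_def using xy subspaceD(3)[OF S] by blast
next
  fix e x assume e: "e \<in> carrier F" and "x \<in> adjoin S w"
  then obtain x0 c where x: "x0 \<in> S" "c \<in> carrier F" "x = vadd x0 (vscale c w)"
    unfolding adjoin_def by blast
  have "x0 \<in> vecs"
    using x subspaceD(1)[OF S] by auto
  then have "vscale e x = vadd (vscale e x0) (vscale (e \<otimes> c) w)"
    using x w e
    by (intro vec_eqI) (auto simp: vec_apply vecsD r_distr m_assoc)
  then show "vscale e x \<in> adjoin S w"
    unfolding adjoin_def using x e subspaceD(4)[OF S] by blast
qed

lemma subset_adjoin:
  assumes "subspace S" "w \<in> vecs"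
  shows "S \<subseteq> adjoin S w"
proof
  fix x assume x: "x \<in> S"
  then have "x \<in> vecs"
    using subspaceD(1)[OF assms(1)] by auto
  then have "x = vadd x (vscale \<zero> w)"
    using assms(2) by (simp add: vscale_zero vadd_vzero_right)
  then show "x \<in> adjoin S w"
    unfolding adjoin_def using x by blast
qed

lemma mem_adjoin:
  assumes "subspace S" "w \<in> vecs"
  shows "w \<in> adjoin S w"
proof -
  have "w = vadd vzero (vscale \<one> w)"
    using assms(2) by (simp add: vscale_one vadd_vzero_left)
  then show ?thesis
    unfolding adjoin_def using subspaceD(2)[OF assms(1)] by blast
qed

lemma adjoin_minimal: "subspace W \<Longrightarrow> S \<subseteq> W \<Longrightarrow> w \<in> W \<Longrightarrow> adjoin S w \<subseteq> W"
  unfolding adjoin_def by (auto dest: subspaceD)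

lemma adjoin_eq_self: "subspace S \<Longrightarrow> w \<in> S \<Longrightarrow> adjoin S w = S"
  using adjoin_minimal[of S S w] subset_adjoin[of S w] subspaceD(1) by blast

lemma vscale_diff_if_vadd_eq:
  assumes v: "x \<in> vecs" "y \<in> vecs" "w \<in> vecs" and c: "c \<in> carrier F" "d \<in> carrier F"
    and eq: "vadd x (vscale c w) = vadd y (vscale d w)"
  shows "vscale (c \<ominus> d) w = vadd y (vscale (\<ominus> \<one>) x)"
proof (rule vec_eqI)
  fix i assume i: "i < a"
  have carr: "x i \<in> carrier F" "y i \<in> carrier F" "w i \<in> carrier F"
    using v i by (auto simp: vecsD)
  have "(c \<ominus> d) \<otimes> w i = (x i \<oplus> c \<otimes> w i) \<oplus> \<ominus> \<one> \<otimes> x i \<oplus> \<ominus> \<one> \<otimes> (d \<otimes> w i)"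
    using carr c by algebra
  also have "x i \<oplus> c \<otimes> w i = y i \<oplus> d \<otimes> w i"
    using fun_cong[OF eq, of i] i by (simp add: vec_apply)
  also have "y i \<oplus> d \<otimes> w i \<oplus> \<ominus> \<one> \<otimes> x i \<oplus> \<ominus> \<one> \<otimes> (d \<otimes> w i) = y i \<oplus> \<ominus> \<one> \<otimes> x i"
    using carr c by algebra
  finally show "vscale (c \<ominus> d) w i = vadd y (vscale (\<ominus> \<one>) x) i"
    using i by (simp add: vec_apply)
qed (use v c in auto)

lemma adjoin_repr_unique:
  assumes S: "subspace S" and w: "w \<in> vecs" "w \<notin> S"
    and x: "x \<in> S" "c \<in> carrier F" and y: "y \<in> S" "d \<in> carrier F"
    and eq: "vadd x (vscale c w) = vadd y (vscale d w)"
  shows "x = y \<and> c = d"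
proof -
  have xy: "x \<in> vecs" "y \<in> vecs"
    using x y subspaceD(1)[OF S] by auto
  have "c = d"
  proof (rule ccontr)
    assume "c \<noteq> d"
    then have "c \<ominus> d \<noteq> \<zero>" "c \<ominus> d \<in> carrier F"
      using x y by (simp_all add: diff_eq_zero_iff)
    moreover have "vscale (c \<ominus> d) w \<in> S"
      using vscale_diff_if_vadd_eq[OF xy w(1) x(2) y(2) eq] x y subspaceD[OF S] by simp
    ultimately show False
      using mem_subspace_if_vscale_mem[OF S _ _ w(1)] w(2) by blast
  qed
  moreover have "x i = y i" if "i < a" for i
    using fun_cong[OF eq, of i] that xy w x \<open>c = d\<close> by (simp add: vec_apply vecsD)
  ultimately show ?thesis
    using vec_eqI[OF xy] by blast
qed

lemma card_adjoin:
  assumes S: "subspace S" and w: "w \<in> vecs" "w \<notin> S"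
  shows "card (adjoin S w) = q * card S"
proof -
  have "inj_on (\<lambda>(x, c). vadd x (vscale c w)) (S \<times> carrier F)"
    using adjoin_repr_unique[OF S w] by (intro inj_onI) auto
  moreover have "adjoin S w = (\<lambda>(x, c). vadd x (vscale c w)) ` (S \<times> carrier F)"
    unfolding adjoin_def by auto
  ultimately show ?thesis
    using finite_subspace[OF S] finite_carrier by (simp add: card_image card_cartesian_product)
qed

lemma adjoin_affine:
  assumes S: "subspace S" and L: "L \<in> S" and w: "w \<in> vecs" and c: "c \<in> carrier F" "c \<noteq> \<zero>"
  shows "adjoin S (vadd (vscale c w) L) = adjoin S w"
proof -
  define y where "y = vadd (vscale c w) L"
  have Lv: "L \<in> vecs"
    using L subspaceD(1)[OF S] by auto
  have yv: "y \<in> vecs"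
    using c w Lv by (simp add: y_def)
  have Sw: "subspace (adjoin S w)" and Sy: "subspace (adjoin S y)"
    using subspace_adjoin[OF S] w yv by auto
  have "L \<in> adjoin S w"
    using subset_adjoin[OF S w] L by blast
  then have "y \<in> adjoin S w"
    unfolding y_def using subspaceD(3,4)[OF Sw] mem_adjoin[OF S w] c by simp
  then have yw: "adjoin S y \<subseteq> adjoin S w"
    using adjoin_minimal[OF Sw subset_adjoin[OF S w]] by blast
  have "vscale c w = vadd y (vscale (\<ominus> \<one>) L)"
    unfolding y_def using c w Lv
    by (intro vec_eqI) (auto simp: vec_apply vecsD l_minus a_assoc r_neg)
  moreover have "L \<in> adjoin S y"
    using subset_adjoin[OF S yv] L by blast
  then have "vadd y (vscale (\<ominus> \<one>) L) \<in> adjoin S y"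
    using subspaceD(3,4)[OF Sy] mem_adjoin[OF S yv] by simp
  ultimately have "w \<in> adjoin S y"
    using mem_subspace_if_vscale_mem[OF Sy c w] by simp
  then have "adjoin S w \<subseteq> adjoin S y"
    using adjoin_minimal[OF Sy subset_adjoin[OF S yv]] by blast
  with yw show ?thesis
    unfolding y_def by blast
qed

lemma span_insert:
  assumes J: "finite J" and v: "\<And>j. j \<in> insert k J \<Longrightarrow> A j \<in> vecs"
  shows "span (insert k J) A = adjoin (span J A) (A k)"
proof
  have SJ: "subspace (span J A)" and SkJ: "subspace (span (insert k J) A)"
    using subspace_span[of J A] subspace_span[of "insert k J" A] J v by auto
  have Ak: "A k \<in> vecs" using v by auto
  have "A j \<in> adjoin (span J A) (A k)" if "j \<in> insert k J" for j
    using that mem_adjoin[OF SJ Ak] subset_adjoin[OF SJ Ak] span_base[OF J, of j A] v by auto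
  then show "span (insert k J) A \<subseteq> adjoin (span J A) (A k)"
    using J by (intro span_minimal subspace_adjoin SJ Ak) auto
  have "span J A \<subseteq> span (insert k J) A"
    using J v by (intro span_minimal SkJ span_base) auto
  moreover have "A k \<in> span (insert k J) A"
    using J v by (intro span_base) auto
  ultimately show "adjoin (span J A) (A k) \<subseteq> span (insert k J) A"
    by (rule adjoin_minimal[OF SkJ])
qed

lemma span_insert_fun_upd:
  assumes "finite J" "k \<notin> J" "\<And>j. j \<in> J \<Longrightarrow> B j \<in> vecs" "w \<in> vecs"
  shows "span (insert k J) (B(k := w)) = adjoin (span J B) w"
proof -
  have "span (insert k J) (B(k := w)) = adjoin (span J (B(k := w))) ((B(k := w)) k)"
    using assms by (intro span_insert) auto
  also have "span J (B(k := w)) = span J B"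
    using assms by (intro span_cong) auto
  also have "(B(k := w)) k = w"
    by simp
  finally show ?thesis .
qed

lemma lincomb_insert_fun_upd:
  assumes "finite J" "k \<notin> J" "v \<in> insert k J \<rightarrow> carrier F" "\<And>j. j \<in> J \<Longrightarrow> B j \<in> vecs" "w \<in> vecs"
  shows "lincomb (insert k J) v (B(k := w)) = vadd (vscale (v k) w) (lincomb J v B)"
proof -
  have "lincomb (insert k J) v (B(k := w)) =
          vadd (vscale (v k) ((B(k := w)) k)) (lincomb J v (B(k := w)))"
    using assms by (intro lincomb_insert) auto
  also have "lincomb J v (B(k := w)) = lincomb J v B"
    using assms by (intro lincomb_cong) auto
  also have "(B(k := w)) k = w"
    by simp
  finally show ?thesis .
qed

section \<open>Counting families of vectors by the dimension of their span\<close>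

lemma span_eq_image:
  assumes "\<And>j. j \<in> J \<Longrightarrow> A j \<in> vecs"
  shows "span J A = (\<lambda>c. lincomb J c A) ` (J \<rightarrow>\<^sub>E carrier F)"
proof
  show "(\<lambda>c. lincomb J c A) ` (J \<rightarrow>\<^sub>E carrier F) \<subseteq> span J A"
    unfolding span_def by (auto simp: PiE_def)
  show "span J A \<subseteq> (\<lambda>c. lincomb J c A) ` (J \<rightarrow>\<^sub>E carrier F)"
  proof
    fix x assume "x \<in> span J A"
    then obtain c where c: "c \<in> J \<rightarrow> carrier F" "x = lincomb J c A"
      unfolding span_def by auto
    then have "x = lincomb J (restrict c J) A"
      using assms by (auto intro: lincomb_cong)
    moreover have "restrict c J \<in> J \<rightarrow>\<^sub>E carrier F"
      using c(1) by auto
    ultimately show "x \<in> (\<lambda>c. lincomb J c A) ` (J \<rightarrow>\<^sub>E carrier F)"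
      by blast
  qed
qed

lemma card_span_indep:
  assumes J: "finite J" and A: "\<And>j. j \<in> J \<Longrightarrow> A j \<in> vecs" and indep: "indep J A"
  shows "card (span J A) = q ^ card J"
proof -
  have "inj_on (\<lambda>c. lincomb J c A) (J \<rightarrow>\<^sub>E carrier F)"
  proof (rule inj_onI)
    fix c d assume c: "c \<in> J \<rightarrow>\<^sub>E carrier F" and d: "d \<in> J \<rightarrow>\<^sub>E carrier F"
      and eq: "lincomb J c A = lincomb J d A"
    define e where "e = (\<lambda>j. c j \<ominus> d j)"
    have e: "e j = c j \<oplus> \<ominus> \<one> \<otimes> d j" if "j \<in> J" for j
      unfolding e_def using that d by (auto simp: PiE_iff minus_eq l_minus)
    have "lincomb J e A = lincomb J (\<lambda>j. c j \<oplus> \<ominus> \<one> \<otimes> d j) A"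
      using e c d A by (intro lincomb_cong) (auto simp: e_def)
    also have "\<dots> = vadd (lincomb J c A) (lincomb J (\<lambda>j. \<ominus> \<one> \<otimes> d j) A)"
      using c d A by (intro lincomb_add[symmetric]) auto
    also have "lincomb J (\<lambda>j. \<ominus> \<one> \<otimes> d j) A = vscale (\<ominus> \<one>) (lincomb J d A)"
      using J d A by (intro lincomb_scale[symmetric]) auto
    also have "vadd (lincomb J c A) (vscale (\<ominus> \<one>) (lincomb J d A)) = vzero"
      unfolding eq using d A by (intro vadd_neg_self lincomb_vecs) (auto simp: PiE_iff)
    finally have "\<forall>j\<in>J. e j = \<zero>"
      using indep c d unfolding indep_def e_def by auto
    then have "\<forall>j\<in>J. c j = d j"
      using c d unfolding e_def by (auto simp: diff_eq_zero_iff PiE_iff)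
    then show "c = d"
      using c d by (auto intro: PiE_ext)
  qed
  then have "card (span J A) = card (J \<rightarrow>\<^sub>E carrier F)"
    using span_eq_image[OF A] by (simp add: card_image)
  then show ?thesis
    using J by (simp add: card_PiE)
qed

lemma span_base_if_dependent:
  assumes J: "finite J" and indep: "indep J A" and j: "j \<notin> J" and dep: "\<not> indep (insert j J) A"
    and A: "\<And>x. x \<in> insert j J \<Longrightarrow> A x \<in> vecs"
  shows "A j \<in> span J A"
proof -
  obtain c k where c: "c \<in> insert j J \<rightarrow> carrier F" and zero: "lincomb (insert j J) c A = vzero"
    and k: "k \<in> insert j J" "c k \<noteq> \<zero>"
    using dep unfolding indep_def by auto
  have L: "lincomb J c A \<in> vecs"
    using c A by auto
  have sum0: "vadd (vscale (c j) (A j)) (lincomb J c A) = vzero"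
    using zero lincomb_insert[OF J j c A] by simp
  have "c j \<noteq> \<zero>"
  proof
    assume "c j = \<zero>"
    then have "lincomb J c A = vzero"
      using sum0 A L by (simp add: vscale_zero vadd_vzero_left)
    then show False
      using indep c k \<open>c j = \<zero>\<close> unfolding indep_def by auto
  qed
  moreover have "vscale (c j) (A j) = vscale (\<ominus> \<one>) (lincomb J c A)"
  proof (rule vec_eqI)
    fix i assume i: "i < a"
    have "c j \<otimes> A j i \<oplus> lincomb J c A i = \<zero>"
      using fun_cong[OF sum0, of i] i by (simp add: vec_apply)
    moreover have carrier: "lincomb J c A i \<in> carrier F" "c j \<otimes> A j i \<in> carrier F"
      using i c A L by (auto simp: vecsD)
    ultimately have "\<ominus> lincomb J c A i = c j \<otimes> A j i"
      by (rule minus_equality)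
    then show "vscale (c j) (A j) i = vscale (\<ominus> \<one>) (lincomb J c A) i"
      using i carrier by (simp add: vscale_apply l_minus)
  qed (use c A L in auto)
  moreover have "vscale (\<ominus> \<one>) (lincomb J c A) \<in> span J A"
    unfolding span_def using c lincomb_scale[OF J, of "\<ominus> \<one>" c A] A
    by (auto intro!: exI[of _ "\<lambda>x. \<ominus> \<one> \<otimes> c x"])
  ultimately show ?thesis
    using mem_subspace_if_vscale_mem[OF subspace_span[OF J] _ _ A] J c A by auto
qed

lemma span_eq_if_maximal_indep:
  assumes J: "finite J" and A: "\<And>j. j \<in> J \<Longrightarrow> A j \<in> vecs" and S: "S \<subseteq> J" "indep S A"
    and maximal: "\<And>j. j \<in> J \<Longrightarrow> j \<notin> S \<Longrightarrow> \<not> indep (insert j S) A"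
  shows "span J A = span S A"
proof -
  have finS: "finite S"
    using S(1) J by (rule finite_subset)
  have AS: "\<And>j. j \<in> S \<Longrightarrow> A j \<in> vecs"
    using S(1) A by blast
  have gens: "A j \<in> span S A" if j: "j \<in> J" for j
  proof (cases "j \<in> S")
    case True
    then show ?thesis by (rule span_base[OF finS _ AS])
  next
    case False
    then show ?thesis
      using span_base_if_dependent[OF finS S(2) False maximal[OF j False]] AS A j by auto
  qed
  have "span J A \<subseteq> span S A"
    by (rule span_minimal[OF subspace_span[OF finS AS] J gens])
  moreover have "span S A \<subseteq> span J A"
    using S(1) by (intro span_minimal subspace_span span_base J A finS) auto
  ultimately show ?thesis
    by blast
qed

lemma ex_maximal_indep:
  assumes J: "finite J"
  obtains S where "S \<subseteq> J" "indep S A" "card S = Max {card S | S. S \<subseteq> J \<and> indep S A}"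
    "\<And>j. j \<in> J \<Longrightarrow> j \<notin> S \<Longrightarrow> \<not> indep (insert j S) A"
proof -
  define K where "K = {card S | S. S \<subseteq> J \<and> indep S A}"
  have K_iff: "k \<in> K \<longleftrightarrow> (\<exists>S. k = card S \<and> S \<subseteq> J \<and> indep S A)" for k
    unfolding K_def by blast
  have "K \<subseteq> card ` Pow J"
    unfolding K_def by blast
  then have "finite K"
    using J by (simp add: finite_subset)
  moreover have "0 \<in> K"
    unfolding K_def indep_def by force
  ultimately have "Max K \<in> K"
    using Max_in by blast
  then obtain S where S: "S \<subseteq> J" "indep S A" "card S = Max K"
    using K_iff[of "Max K"] by auto
  have "\<not> indep (insert j S) A" if "j \<in> J" "j \<notin> S" for j
  proof
    assume "indep (insert j S) A"
    then have "card (insert j S) \<in> K"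
      using K_iff S(1) that by blast
    then have "card (insert j S) \<le> card S"
      using \<open>finite K\<close> S(3) by simp
    then show False
      using finite_subset[OF S(1) J] that by simp
  qed
  then show ?thesis
    using that S unfolding K_def by blast
qed

lemma card_span_eq_power_rank:
  assumes J: "finite J" and A: "\<And>j. j \<in> J \<Longrightarrow> A j \<in> vecs"
  shows "card (span J A) = q ^ Max {card S | S. S \<subseteq> J \<and> indep S A}"
proof -
  obtain S where S: "S \<subseteq> J" "indep S A" "card S = Max {card S | S. S \<subseteq> J \<and> indep S A}"
    and maximal: "\<And>j. j \<in> J \<Longrightarrow> j \<notin> S \<Longrightarrow> \<not> indep (insert j S) A"
    using ex_maximal_indep[OF J] by blast
  have "span J A = span S A"
    using span_eq_if_maximal_indep[OF J A S(1,2) maximal] .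
  moreover have "card (span S A) = q ^ card S"
    using S(1) J A by (intro card_span_indep[OF _ _ S(2)]) (auto intro: finite_subset)
  ultimately show ?thesis
    using S(3) by simp
qed

lemma sum_adjoin_split:
  assumes S: "subspace S" "S \<subseteq> W" and W: "W \<subseteq> vecs"
  shows "(\<Sum>w\<in>W. if card (adjoin S w) = k then g w else 0) =
           (if card S = k then sum g S else 0) + (if q * card S = k then sum g (W - S) else 0)"
proof -
  have finW: "finite W"
    using W finite_vecs finite_subset by blast
  have "(\<Sum>w\<in>W. if card (adjoin S w) = k then g w else 0) =
          (\<Sum>w\<in>S. if card (adjoin S w) = k then g w else 0) +
          (\<Sum>w\<in>W - S. if card (adjoin S w) = k then g w else 0)"
    using finW S(2) by (metis (no_types) sum.subset_diff add.commute)
  also have "(\<Sum>w\<in>S. if card (adjoin S w) = k then g w else 0) = (if card S = k then sum g S else 0)"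
    using adjoin_eq_self[OF S(1)] by (simp cong: sum.cong)
  also have "(\<Sum>w\<in>W - S. if card (adjoin S w) = k then g w else 0) =
               (\<Sum>w\<in>W - S. if q * card S = k then g w else 0)"
    using card_adjoin[OF S(1)] W by (intro sum.cong) auto
  also have "\<dots> = (if q * card S = k then sum g (W - S) else 0)"
    by simp
  finally show ?thesis .
qed

lemma sum_adjoin_card_power:
  assumes W: "subspace W" "card W = q ^ d" and S: "subspace S" "S \<subseteq> W"
  shows "(\<Sum>w\<in>W. if card (adjoin S w) = q ^ r then 1 else 0 :: nat) =
           (if card S = q ^ r then q ^ r else 0) +
           (case r of 0 \<Rightarrow> 0 | Suc s \<Rightarrow> if card S = q ^ s then q ^ d - q ^ s else 0)"
proof -
  have "card (W - S) = q ^ d - card S"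
    using card_Diff_subset[OF finite_subspace[OF S(1)] S(2)] W(2) by simp
  then show ?thesis
    using sum_adjoin_split[OF S subspaceD(1)[OF W(1)], of "q ^ r" "\<lambda>_. 1 :: nat"] card_carrier_ge_2
    by (cases r) simp_all
qed

lemma count_extensions_rank:
  assumes W: "subspace W" "card W = q ^ d" and J: "finite J" "k \<notin> J" and B: "B \<in> J \<rightarrow>\<^sub>E W"
  shows "(\<Sum>w\<in>W. if card (span (insert k J) (B(k := w))) = q ^ r then 1 else 0 :: nat) =
           (if card (span J B) = q ^ r then q ^ r else 0) +
           (case r of 0 \<Rightarrow> 0 | Suc s \<Rightarrow> if card (span J B) = q ^ s then q ^ d - q ^ s else 0)"
proof -
  have Wv: "W \<subseteq> vecs"
    using subspaceD(1)[OF W(1)] .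
  have BJ: "\<And>j. j \<in> J \<Longrightarrow> B j \<in> vecs"
    using B Wv by auto
  have "(\<Sum>w\<in>W. if card (span (insert k J) (B(k := w))) = q ^ r then 1 else 0 :: nat) =
          (\<Sum>w\<in>W. if card (adjoin (span J B) w) = q ^ r then 1 else 0)"
    using Wv by (intro sum.cong) (auto simp: span_insert_fun_upd[OF J BJ])
  also have "\<dots> = (if card (span J B) = q ^ r then q ^ r else 0) +
      (case r of 0 \<Rightarrow> 0 | Suc s \<Rightarrow> if card (span J B) = q ^ s then q ^ d - q ^ s else 0)"
    using J B W BJ by (intro sum_adjoin_card_power subspace_span span_minimal) auto
  finally show ?thesis .
qed

lemma card_families_rank_insert:
  assumes W: "subspace W" "card W = q ^ d" and J: "finite J" "k \<notin> J"
  shows "card {A \<in> insert k J \<rightarrow>\<^sub>E W. card (span (insert k J) A) = q ^ r} =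
           q ^ r * card {B \<in> J \<rightarrow>\<^sub>E W. card (span J B) = q ^ r} +
           (case r of 0 \<Rightarrow> 0 | Suc s \<Rightarrow> (q ^ d - q ^ s) * card {B \<in> J \<rightarrow>\<^sub>E W. card (span J B) = q ^ s})"
proof -
  have fin: "finite (J \<rightarrow>\<^sub>E W)" "finite (insert k J \<rightarrow>\<^sub>E W)"
    using finite_subspace[OF W(1)] J by (simp_all add: finite_PiE)
  have "card {A \<in> insert k J \<rightarrow>\<^sub>E W. card (span (insert k J) A) = q ^ r} =
          (\<Sum>B\<in>J \<rightarrow>\<^sub>E W. \<Sum>w\<in>W. if card (span (insert k J) (B(k := w))) = q ^ r then 1 else 0)"
    unfolding card_filter_eq_sum[OF fin(2)] by (rule sum_PiE_insert[OF J(2)])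
  also have "\<dots> = (\<Sum>B\<in>J \<rightarrow>\<^sub>E W. if card (span J B) = q ^ r then q ^ r else 0) +
      (\<Sum>B\<in>J \<rightarrow>\<^sub>E W. case r of 0 \<Rightarrow> 0 | Suc s \<Rightarrow> if card (span J B) = q ^ s then q ^ d - q ^ s else 0)"
    using count_extensions_rank[OF W J] by (simp add: sum.distrib cong: sum.cong)
  also have "\<dots> = q ^ r * card {B \<in> J \<rightarrow>\<^sub>E W. card (span J B) = q ^ r} +
      (case r of 0 \<Rightarrow> 0 | Suc s \<Rightarrow> (q ^ d - q ^ s) * card {B \<in> J \<rightarrow>\<^sub>E W. card (span J B) = q ^ s})"
    using fin(1) by (cases r) (simp_all add: sum_if_const)
  finally show ?thesis .
qed

lemma card_families_rank:
  assumes W: "subspace W" "card W = q ^ d" and J: "finite J"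
  shows "card {A \<in> J \<rightarrow>\<^sub>E W. card (span J A) = q ^ r} = rank_tuples q d (card J) r"
  using J
proof (induction J arbitrary: r rule: finite_induct)
  case empty
  have "span {} A = {vzero}" for A
    unfolding span_def by auto
  then show ?case
    using card_carrier_ge_2 by (cases r) (auto simp: card_Suc_eq)
next
  case (insert k J)
  have "card {A \<in> insert k J \<rightarrow>\<^sub>E W. card (span (insert k J) A) = q ^ r} =
          q ^ r * rank_tuples q d (card J) r +
          (case r of 0 \<Rightarrow> 0 | Suc s \<Rightarrow> (q ^ d - q ^ s) * rank_tuples q d (card J) s)"
    using card_families_rank_insert[OF W insert.hyps, of r] insert.IH[of r] insert.IH[of "r - 1"]
    by (cases r) simp_all
  then show ?case
    using insert.hyps by (simp add: rank_tuples_Suc)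
qed

section \<open>Orthogonal complements and additive characters\<close>

definition dot :: "(nat \<Rightarrow> nat) \<Rightarrow> (nat \<Rightarrow> nat) \<Rightarrow> nat" where
  "dot u x = (\<Oplus>i\<in>{..<a}. u i \<otimes> x i)"

definition perp :: "(nat \<Rightarrow> nat) \<Rightarrow> (nat \<Rightarrow> nat) set" where
  "perp u = {w \<in> vecs. dot u w = \<zero>}"

lemma dot_closed: "u \<in> vecs \<Longrightarrow> x \<in> vecs \<Longrightarrow> dot u x \<in> carrier F"
  unfolding dot_def by (intro finsum_closed) (auto simp: vecsD)

lemma dot_vadd:
  assumes "u \<in> vecs" "x \<in> vecs" "y \<in> vecs"
  shows "dot u (vadd x y) = dot u x \<oplus> dot u y"
proof -
  have "dot u (vadd x y) = (\<Oplus>i\<in>{..<a}. u i \<otimes> x i \<oplus> u i \<otimes> y i)"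
    unfolding dot_def using assms by (intro finsum_cong') (auto simp: vec_apply vecsD r_distr)
  also have "\<dots> = dot u x \<oplus> dot u y"
    unfolding dot_def using assms by (intro finsum_addf) (auto simp: vecsD)
  finally show ?thesis .
qed

lemma dot_vscale:
  assumes "u \<in> vecs" "x \<in> vecs" "c \<in> carrier F"
  shows "dot u (vscale c x) = c \<otimes> dot u x"
proof -
  have "dot u (vscale c x) = (\<Oplus>i\<in>{..<a}. c \<otimes> (u i \<otimes> x i))"
    unfolding dot_def using assms by (intro finsum_cong') (auto simp: vec_apply vecsD m_lcomm)
  also have "\<dots> = c \<otimes> dot u x"
    unfolding dot_def using assms by (intro finsum_rdistr[symmetric]) (auto simp: vecsD)
  finally show ?thesis .
qed

lemma subspace_perp: "u \<in> vecs \<Longrightarrow> subspace (perp u)"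
  unfolding subspace_def perp_def
  using dot_vscale[of u vzero \<zero>] dot_closed[of u vzero]
  by (auto simp: dot_vadd dot_vscale vscale_vzero)

lemma ex_dot_nonzero:
  assumes u: "u \<in> vecs" "u \<noteq> vzero"
  obtains w where "w \<in> vecs" "dot u w \<noteq> \<zero>"
proof -
  obtain l where l: "l < a" "u l \<noteq> \<zero>"
    using u vec_eqI[OF u(1) vzero_vecs] by (auto simp: vzero_apply)
  define e where "e = (\<lambda>i. if i = l then \<one> else if i < a then \<zero> else 0)"
  have e: "e \<in> vecs"
    unfolding vecs_def e_def using l by auto
  have "dot u e = (\<Oplus>i\<in>{..<a}. if l = i then u i else \<zero>)"
    unfolding dot_def using u e by (intro finsum_cong') (auto simp: e_def vecsD)
  also have "\<dots> = u l"
    using u l by (intro finsum_singleton) (auto simp: vecsD)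
  finally show ?thesis
    using that e l by auto
qed

lemma card_perp:
  assumes u: "u \<in> vecs" "u \<noteq> vzero"
  shows "card (perp u) = q ^ (a - 1)" and "0 < a"
proof -
  obtain w0 where w0: "w0 \<in> vecs" "dot u w0 \<noteq> \<zero>"
    using ex_dot_nonzero[OF u] .
  define t where "t = dot u w0"
  have t: "t \<in> carrier F" "t \<noteq> \<zero>"
    using w0 dot_closed[OF u(1)] by (auto simp: t_def)
  have P: "subspace (perp u)"
    using subspace_perp[OF u(1)] .
  have "x \<in> adjoin (perp u) w0" if x: "x \<in> vecs" for x
  proof -
    define c where "c = dot u x \<otimes> inv t"
    have c: "c \<in> carrier F"
      using dot_closed[OF u(1) x] field_inv_closed[OF t] by (simp add: c_def)
    define y where "y = vadd x (vscale (\<ominus> c) w0)"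
    have "dot u y = dot u x \<ominus> dot u x \<otimes> (inv t \<otimes> t)"
      using x w0 c u dot_closed[OF u(1) x] dot_closed[OF u(1) w0(1)] field_inv_closed[OF t]
      by (simp add: y_def dot_vadd dot_vscale t_def c_def l_minus minus_eq m_assoc)
    then have "y \<in> perp u"
      using x w0 c dot_closed[OF u(1) x] by (simp add: perp_def y_def field_l_inv[OF t] r_neg minus_eq)
    moreover have "x = vadd y (vscale c w0)"
      using x w0 c by (intro vec_eqI) (auto simp: y_def vec_apply vecsD l_minus a_assoc l_neg)
    ultimately show ?thesis
      unfolding adjoin_def using c by blast
  qed
  moreover have "adjoin (perp u) w0 \<subseteq> vecs"
    using subspaceD(1)[OF subspace_adjoin[OF P w0(1)]] .
  moreover have "w0 \<notin> perp u"
    using w0 by (simp add: perp_def)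
  ultimately have "q ^ a = q * card (perp u)"
    using card_adjoin[OF P w0(1)] card_vecs by (metis subsetI subset_antisym)
  moreover show "0 < a"
    using u vec_eqI[OF u(1) vzero_vecs] by (cases a) auto
  ultimately show "card (perp u) = q ^ (a - 1)"
    using card_carrier_ge_2 by (cases a) auto
qed

lemma nontriv_add_char_zero:
  assumes "nontriv_add_char F \<psi>"
  shows "\<psi> \<zero> = 1"
proof -
  have "\<psi> \<zero> * \<psi> \<zero> = \<psi> \<zero> * 1"
    using assms unfolding nontriv_add_char_def by (metis l_zero mult_1_right zero_closed)
  moreover have "cmod (\<psi> \<zero>) = 1"
    using assms unfolding nontriv_add_char_def by blast
  then have "\<psi> \<zero> \<noteq> 0"
    by auto
  ultimately show ?thesis
    by simp
qed

lemma sum_translate_subspace: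
  assumes S: "subspace S" and w0: "w0 \<in> S"
  shows "(\<Sum>w\<in>S. f (vadd w w0)) = (\<Sum>w\<in>S. f w)"
proof (rule sum.reindex_bij_witness[where i = "\<lambda>w. vadd w (vscale (\<ominus> \<one>) w0)" and j = "\<lambda>w. vadd w w0"])
  fix w assume w: "w \<in> S"
  have v: "w \<in> vecs" "w0 \<in> vecs"
    using w w0 subspaceD(1)[OF S] by auto
  show "vadd (vadd w w0) (vscale (\<ominus> \<one>) w0) = w"
    using v by (intro vec_eqI) (auto simp: vec_apply vecsD l_minus a_assoc r_neg)
  show "vadd (vadd w (vscale (\<ominus> \<one>) w0)) w0 = w"
    using v by (intro vec_eqI) (auto simp: vec_apply vecsD l_minus a_assoc l_neg)
  show "vadd w w0 \<in> S" "vadd w (vscale (\<ominus> \<one>) w0) \<in> S"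
    using w w0 subspaceD[OF S] by auto
qed simp

lemma ex_dot_eq_in_subspace:
  assumes S: "subspace S" "\<not> S \<subseteq> perp u" and u: "u \<in> vecs" and x: "x \<in> carrier F"
  obtains w where "w \<in> S" "dot u w = x"
proof -
  obtain w1 where w1: "w1 \<in> S" "dot u w1 \<noteq> \<zero>"
    using S subspaceD(1)[OF S(1)] unfolding perp_def by auto
  define t where "t = dot u w1"
  have w1v: "w1 \<in> vecs"
    using w1 subspaceD(1)[OF S(1)] by auto
  have t: "t \<in> carrier F" "t \<noteq> \<zero>"
    using w1 dot_closed[OF u w1v] by (auto simp: t_def)
  have c: "x \<otimes> inv t \<in> carrier F"
    using x field_inv_closed[OF t] by simp
  have "dot u (vscale (x \<otimes> inv t) w1) = x \<otimes> (inv t \<otimes> t)"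
    using dot_vscale[OF u w1v c] x t field_inv_closed[OF t] by (simp add: t_def m_assoc)
  then have "dot u (vscale (x \<otimes> inv t) w1) = x"
    using x by (simp add: field_l_inv[OF t])
  then show ?thesis
    using that subspaceD(4)[OF S(1) c w1(1)] by blast
qed

lemma sum_char_subspace:
  assumes \<psi>: "nontriv_add_char F \<psi>" and S: "subspace S" and u: "u \<in> vecs"
  shows "(\<Sum>w\<in>S. \<psi> (dot u w)) = (if S \<subseteq> perp u then of_nat (card S) else 0)"
proof (cases "S \<subseteq> perp u")
  case True
  then have "(\<Sum>w\<in>S. \<psi> (dot u w)) = (\<Sum>w\<in>S. 1)"
    using nontriv_add_char_zero[OF \<psi>] by (intro sum.cong) (auto simp: perp_def)
  then show ?thesis
    using True by simp
next
  case False
  obtain x0 where x0: "x0 \<in> carrier F" "\<psi> x0 \<noteq> 1"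
    using \<psi> unfolding nontriv_add_char_def by auto
  obtain w0 where w0: "w0 \<in> S" "dot u w0 = x0"
    using ex_dot_eq_in_subspace[OF S False u x0(1)] .
  have hom: "\<psi> (x \<oplus> y) = \<psi> x * \<psi> y" if "x \<in> carrier F" "y \<in> carrier F" for x y
    using \<psi> that unfolding nontriv_add_char_def by auto
  have "(\<Sum>w\<in>S. \<psi> (dot u w)) = (\<Sum>w\<in>S. \<psi> (dot u (vadd w w0)))"
    using sum_translate_subspace[OF S w0(1), of "\<lambda>w. \<psi> (dot u w)"] by simp
  also have "\<dots> = (\<Sum>w\<in>S. \<psi> (dot u w) * \<psi> x0)"
  proof (rule sum.cong[OF refl])
    fix w assume "w \<in> S"
    then have "w \<in> vecs" "w0 \<in> vecs"
      using w0 subspaceD(1)[OF S] by auto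
    then show "\<psi> (dot u (vadd w w0)) = \<psi> (dot u w) * \<psi> x0"
      using dot_vadd[OF u] w0(2) hom[OF dot_closed[OF u] x0(1)] by simp
  qed
  also have "\<dots> = \<psi> x0 * (\<Sum>w\<in>S. \<psi> (dot u w))"
    by (simp add: sum_distrib_left mult.commute)
  finally have "(1 - \<psi> x0) * (\<Sum>w\<in>S. \<psi> (dot u w)) = 0"
    by (simp add: algebra_simps)
  then show ?thesis
    using False x0(2) by simp
qed

section \<open>Matrices as families of columns\<close>

definition columns :: "nat \<Rightarrow> (nat \<Rightarrow> nat \<Rightarrow> nat) \<Rightarrow> nat \<Rightarrow> nat \<Rightarrow> nat" where
  "columns m M = (\<lambda>j\<in>{..<m}. \<lambda>i. M i j)"

lemma columns_vecs: "M \<in> matrices F a m \<Longrightarrow> j < m \<Longrightarrow> columns m M j \<in> vecs"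
  unfolding matrices_def vecs_def columns_def by auto

lemma bij_betw_columns: "bij_betw (columns m) (matrices F a m) ({..<m} \<rightarrow>\<^sub>E vecs)"
proof (rule bij_betwI[where g = "\<lambda>f i j. if j < m then f j i else 0"])
  show "columns m \<in> matrices F a m \<rightarrow> {..<m} \<rightarrow>\<^sub>E vecs"
    using columns_vecs by (auto simp: columns_def)
  show "(\<lambda>f i j. if j < m then f j i else 0) \<in> ({..<m} \<rightarrow>\<^sub>E vecs) \<rightarrow> matrices F a m"
    unfolding matrices_def vecs_def by (auto simp: PiE_def Pi_def)
next
  fix M assume "M \<in> matrices F a m"
  then show "(\<lambda>i j. if j < m then columns m M j i else 0) = M"
    unfolding matrices_def columns_def by (auto intro!: ext)
next
  fix f assume "f \<in> {..<m} \<rightarrow>\<^sub>E vecs"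
  then show "columns m (\<lambda>i j. if j < m then f j i else 0) = f"
    unfolding columns_def by (auto simp: PiE_def extensional_def)
qed

lemma lincomb_columns:
  assumes "M \<in> matrices F a m" "J \<subseteq> {..<m}" "c \<in> J \<rightarrow> carrier F" "i < a"
  shows "lincomb J c (columns m M) i = (\<Oplus>j\<in>J. c j \<otimes> M i j)"
  using assms unfolding lincomb_def columns_def matrices_def
  by (auto intro!: finsum_cong' simp: subset_iff Pi_def)

lemma lin_indep_cols_iff_indep:
  assumes M: "M \<in> matrices F a m" and S: "S \<subseteq> {..<m}"
  shows "lin_indep_cols F a M S \<longleftrightarrow> indep S (columns m M)"
proof -
  have "lincomb S c (columns m M) = vzero \<longleftrightarrow> (\<forall>i<a. (\<Oplus>j\<in>S. c j \<otimes> M i j) = \<zero>)"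
    if c: "c \<in> S \<rightarrow> carrier F" for c
  proof -
    have "lincomb S c (columns m M) \<in> vecs"
      using c columns_vecs[OF M] S by (intro lincomb_vecs) auto
    then show ?thesis
      using lincomb_columns[OF M S c] vec_eqI[OF _ vzero_vecs]
      by (auto simp: vzero_apply)
  qed
  then show ?thesis
    unfolding lin_indep_cols_def indep_def by auto
qed

lemma card_span_columns:
  assumes "M \<in> matrices F a m"
  shows "card (span {..<m} (columns m M)) = q ^ mat_rank F a m M"
proof -
  have "{card S | S. S \<subseteq> {..<m} \<and> lin_indep_cols F a M S} =
          {card S | S. S \<subseteq> {..<m} \<and> indep S (columns m M)}"
    using lin_indep_cols_iff_indep[OF assms] by blast
  moreover have "card (span {..<m} (columns m M)) =
                   q ^ Max {card S | S. S \<subseteq> {..<m} \<and> indep S (columns m M)}"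
    using columns_vecs[OF assms] by (intro card_span_eq_power_rank) auto
  ultimately show ?thesis
    unfolding mat_rank_def by simp
qed

lemma mat_rank_eq_iff:
  "M \<in> matrices F a m \<Longrightarrow> mat_rank F a m M = r \<longleftrightarrow> card (span {..<m} (columns m M)) = q ^ r"
  using card_span_columns card_carrier_ge_2 by (simp add: power_inject_exp)

lemma sum_rank_orbit:
  "(\<Sum>M\<in>rank_orbit F a m r. f (columns m M)) =
     (\<Sum>A\<in>{..<m} \<rightarrow>\<^sub>E vecs. if card (span {..<m} A) = q ^ r then f A else 0)"
proof -
  have "finite (matrices F a m)"
    using bij_betw_finite[OF bij_betw_columns] finite_vecs by (simp add: finite_PiE)
  then have "(\<Sum>M\<in>rank_orbit F a m r. f (columns m M)) =
               (\<Sum>M\<in>matrices F a m. if card (span {..<m} (columns m M)) = q ^ r then f (columns m M) else 0)"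
    unfolding rank_orbit_def by (simp add: sum.inter_filter[symmetric] mat_rank_eq_iff cong: conj_cong)
  also have "\<dots> = (\<Sum>A\<in>{..<m} \<rightarrow>\<^sub>E vecs. if card (span {..<m} A) = q ^ r then f A else 0)"
    by (rule sum.reindex_bij_betw[OF bij_betw_columns])
  finally show ?thesis .
qed

lemma card_rank_orbit: "card (rank_orbit F a m r) = rank_tuples q a m r"
proof -
  have "card (rank_orbit F a m r) =
          (\<Sum>A\<in>{..<m} \<rightarrow>\<^sub>E vecs. if card (span {..<m} A) = q ^ r then 1 else 0)"
    using sum_rank_orbit[of "\<lambda>_. 1::nat" m r] by simp
  also have "\<dots> = card {A \<in> {..<m} \<rightarrow>\<^sub>E vecs. card (span {..<m} A) = q ^ r}"
    using finite_vecs by (simp add: card_filter_eq_sum finite_PiE)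
  also have "\<dots> = rank_tuples q a m r"
    using card_families_rank[OF subspace_vecs card_vecs] by simp
  finally show ?thesis .
qed

lemma subspace_card_q_eq_line:
  assumes S: "subspace S" "card S = q" and u: "u \<in> S" "u \<noteq> vzero"
  shows "S = {vscale c u | c. c \<in> carrier F}"
proof -
  have uv: "u \<in> vecs"
    using u subspaceD(1)[OF S(1)] by auto
  have "adjoin {vzero} u \<subseteq> S"
    using adjoin_minimal[OF S(1)] subspaceD(2)[OF S(1)] u(1) by blast
  moreover have "card (adjoin {vzero} u) = card S"
    using card_adjoin[OF subspace_vzero uv] u(2) S(2) by simp
  ultimately have "S = adjoin {vzero} u"
    using card_subset_eq[OF finite_subspace[OF S(1)]] by blast
  also have "\<dots> = {vscale c u | c. c \<in> carrier F}"
    unfolding adjoin_def using uv by (force simp: vadd_vzero_left)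
  finally show ?thesis .
qed

lemma rank_one_factor:
  assumes T: "T \<in> matrices F a m" and rank: "mat_rank F a m T = 1"
  obtains u v k where "u \<in> vecs" "u \<noteq> vzero" "v \<in> {..<m} \<rightarrow> carrier F" "k < m" "v k \<noteq> \<zero>"
    "\<And>i j. i < a \<Longrightarrow> j < m \<Longrightarrow> T i j = v j \<otimes> u i"
proof -
  define S where "S = span {..<m} (columns m T)"
  have cols: "\<And>j. j \<in> {..<m} \<Longrightarrow> columns m T j \<in> vecs"
    using columns_vecs[OF T] by auto
  have S: "subspace S" "card S = q"
    unfolding S_def using cols card_span_columns[OF T] rank by (auto intro: subspace_span)
  have col_S: "columns m T j \<in> S" if "j < m" for j
    unfolding S_def using that cols by (intro span_base) auto
  obtain k where k: "k < m" "columns m T k \<noteq> vzero"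
  proof (rule ccontr)
    assume "\<not> thesis"
    then have "S \<subseteq> {vzero}"
      unfolding S_def using that by (intro span_minimal subspace_vzero) auto
    then have "card S \<le> 1"
      using card_mono[of "{vzero}" S] by simp
    then show False
      using S(2) card_carrier_ge_2 by simp
  qed
  define u where "u = columns m T k"
  have u: "u \<in> vecs" "u \<noteq> vzero" "u \<in> S"
    using k cols col_S by (auto simp: u_def)
  have "\<forall>j\<in>{..<m}. \<exists>c. c \<in> carrier F \<and> columns m T j = vscale c u"
    using col_S subspace_card_q_eq_line[OF S u(3,2)] by auto
  then obtain v where v: "\<And>j. j < m \<Longrightarrow> v j \<in> carrier F \<and> columns m T j = vscale (v j) u"
    by (metis bchoice lessThan_iff)
  have vk: "v k \<noteq> \<zero>"
  proof
    assume "v k = \<zero>"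
    then have "u = vscale \<zero> u"
      using v[OF k(1)] by (simp add: u_def)
    then show False
      using u vscale_zero by simp
  qed
  have Tuv: "T i j = v j \<otimes> u i" if "i < a" "j < m" for i j
    using fun_cong[OF conjunct2[OF v[OF that(2)]], of i] that
    by (simp add: vscale_apply columns_def)
  show ?thesis
    using v by (intro that[OF u(1,2) _ k(1) vk Tuv]) auto
qed

lemma trace_tA_rank_one:
  assumes T: "\<And>i j. i < a \<Longrightarrow> j < m \<Longrightarrow> T i j = v j \<otimes> u i"
    and u: "u \<in> vecs" and v: "v \<in> {..<m} \<rightarrow> carrier F" and M: "M \<in> matrices F a m"
  shows "trace_tA F a m T M = dot u (lincomb {..<m} v (columns m M))"
  unfolding trace_tA_def dot_def
proof (rule finsum_cong')
  have "lincomb {..<m} v (columns m M) \<in> vecs"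
    using v columns_vecs[OF M] by (intro lincomb_vecs) auto
  then show "(\<lambda>i. u i \<otimes> lincomb {..<m} v (columns m M) i) \<in> {..<a} \<rightarrow> carrier F"
    using u by (auto simp: vecsD)
next
  fix i assume "i \<in> {..<a}"
  then have i: "i < a" by simp
  have Mi: "M i j \<in> carrier F" if "j < m" for j
    using M i that unfolding matrices_def by auto
  have "(\<Oplus>j\<in>{..<m}. T i j \<otimes> M i j) = (\<Oplus>j\<in>{..<m}. u i \<otimes> (v j \<otimes> M i j))"
    using T i v Mi vecsD[OF u i] by (intro finsum_cong') (auto simp: m_ac Pi_def)
  also have "\<dots> = u i \<otimes> (\<Oplus>j\<in>{..<m}. v j \<otimes> M i j)"
    using u i v Mi by (intro finsum_rdistr[symmetric]) (auto simp: vecsD)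
  also have "\<dots> = u i \<otimes> lincomb {..<m} v (columns m M) i"
    using lincomb_columns[OF M _ v i] by simp
  finally show "(\<Oplus>j\<in>{..<m}. T i j \<otimes> M i j) = u i \<otimes> lincomb {..<m} v (columns m M) i" .
qed simp

section \<open>Fourier coefficients at rank-one matrices\<close>

lemma bij_betw_affine:
  assumes c: "c \<in> carrier F" "c \<noteq> \<zero>" and L: "L \<in> vecs"
  shows "bij_betw (\<lambda>w. vadd (vscale c w) L) vecs vecs"
proof (rule bij_betwI[where g = "\<lambda>y. vscale (inv c) (vadd y (vscale (\<ominus> \<one>) L))"])
  have ic: "inv c \<in> carrier F"
    using field_inv_closed[OF c] .
  show "(\<lambda>w. vadd (vscale c w) L) \<in> vecs \<rightarrow> vecs"
    using c L by simp
  show "(\<lambda>y. vscale (inv c) (vadd y (vscale (\<ominus> \<one>) L))) \<in> vecs \<rightarrow> vecs"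
    using ic L by simp
next
  fix w assume w: "w \<in> vecs"
  show "vscale (inv c) (vadd (vadd (vscale c w) L) (vscale (\<ominus> \<one>) L)) = w"
  proof (rule vec_eqI)
    fix i assume i: "i < a"
    have "c \<otimes> w i \<oplus> L i \<oplus> \<ominus> \<one> \<otimes> L i = c \<otimes> w i"
      using c w L i by (simp add: vecsD l_minus a_assoc r_neg)
    then show "vscale (inv c) (vadd (vadd (vscale c w) L) (vscale (\<ominus> \<one>) L)) i = w i"
      using i c w field_inv_closed[OF c]
      by (simp add: vec_apply vecsD m_assoc[symmetric] field_l_inv)
  qed (use w c L field_inv_closed[OF c] in auto)
next
  fix y assume y: "y \<in> vecs"
  show "vadd (vscale c (vscale (inv c) (vadd y (vscale (\<ominus> \<one>) L)))) L = y"
  proof (rule vec_eqI)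
    fix i assume i: "i < a"
    have "y i \<oplus> \<ominus> \<one> \<otimes> L i \<oplus> L i = y i"
      using y L i by (simp add: vecsD l_minus a_assoc l_neg)
    then show "vadd (vscale c (vscale (inv c) (vadd y (vscale (\<ominus> \<one>) L)))) L i = y i"
      using i c y L field_inv_closed[OF c]
      by (simp add: vec_apply vecsD m_assoc[symmetric] field_r_inv)
  qed (use y c L field_inv_closed[OF c] in auto)
qed

lemma sum_char_adjoin:
  assumes \<psi>: "nontriv_add_char F \<psi>" and u: "u \<in> vecs" "u \<noteq> vzero" and S: "subspace S"
  shows "(\<Sum>w\<in>vecs. if card (adjoin S w) = q ^ r then \<psi> (dot u w) else 0) =
           (if S \<subseteq> perp u
            then of_nat (if card S = q ^ r then q ^ r else 0) -
                 of_nat (case r of 0 \<Rightarrow> 0 | Suc s \<Rightarrow> if card S = q ^ s then q ^ s else 0)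
            else 0)"
proof -
  have sum_S: "(\<Sum>w\<in>S. \<psi> (dot u w)) = (if S \<subseteq> perp u then of_nat (card S) else 0)"
    using sum_char_subspace[OF \<psi> S u(1)] .
  obtain w0 where "w0 \<in> vecs" "dot u w0 \<noteq> \<zero>"
    using ex_dot_nonzero[OF u] .
  then have "\<not> vecs \<subseteq> perp u"
    by (auto simp: perp_def)
  then have "(\<Sum>w\<in>vecs. \<psi> (dot u w)) = 0"
    using sum_char_subspace[OF \<psi> subspace_vecs u(1)] by simp
  then have sum_rest: "(\<Sum>w\<in>vecs - S. \<psi> (dot u w)) = - (\<Sum>w\<in>S. \<psi> (dot u w))"
    using sum_diff[OF finite_vecs subspaceD(1)[OF S], of "\<lambda>w. \<psi> (dot u w)"] by simp
  note split = sum_adjoin_split[OF S subspaceD(1)[OF S] order_refl, of "q ^ r" "\<lambda>w. \<psi> (dot u w)"]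
  show ?thesis
  proof (cases r)
    case 0
    then show ?thesis
      using split sum_S card_carrier_ge_2 by auto
  next
    case (Suc s)
    have "q ^ s < q ^ Suc s"
      using card_carrier_ge_2 by simp
    then show ?thesis
      using split sum_S sum_rest Suc card_carrier_ge_2 by auto
  qed
qed

lemma span_subset_iff_PiE:
  assumes J: "finite J" and B: "B \<in> J \<rightarrow>\<^sub>E vecs" and P: "subspace P"
  shows "span J B \<subseteq> P \<longleftrightarrow> B \<in> J \<rightarrow>\<^sub>E P"
proof
  assume "span J B \<subseteq> P"
  moreover have "B j \<in> span J B" if "j \<in> J" for j
    using J that B by (intro span_base) auto
  ultimately show "B \<in> J \<rightarrow>\<^sub>E P"
    using B by (auto simp: PiE_iff)
next
  assume "B \<in> J \<rightarrow>\<^sub>E P"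
  then show "span J B \<subseteq> P"
    using P J by (intro span_minimal) auto
qed

lemma sum_char_extensions:
  assumes \<psi>: "nontriv_add_char F \<psi>" and u: "u \<in> vecs" "u \<noteq> vzero"
    and J: "finite J" "k \<notin> J" and v: "v \<in> insert k J \<rightarrow> carrier F" "v k \<noteq> \<zero>"
    and B: "B \<in> J \<rightarrow>\<^sub>E vecs"
  shows "(\<Sum>w\<in>vecs. if card (span (insert k J) (B(k := w))) = q ^ r
                      then \<psi> (dot u (lincomb (insert k J) v (B(k := w)))) else 0) =
         (if B \<in> J \<rightarrow>\<^sub>E perp u
          then of_nat (if card (span J B) = q ^ r then q ^ r else 0) -
               of_nat (case r of 0 \<Rightarrow> 0 | Suc s \<Rightarrow> if card (span J B) = q ^ s then q ^ s else 0)
          else 0)"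
proof -
  define L where "L = lincomb J v B"
  have BJ: "\<And>j. j \<in> J \<Longrightarrow> B j \<in> vecs"
    using B by auto
  have SB: "subspace (span J B)"
    using J(1) BJ by (rule subspace_span)
  have L: "L \<in> span J B" "L \<in> vecs"
    unfolding L_def span_def using v BJ by auto
  have vk: "v k \<in> carrier F"
    using v by auto
  txt \<open>Substitute \<open>y = v k \<cdot> w + L\<close>: a bijection of \<open>vecs\<close> which does not change the adjoined subspace.\<close>
  have "span (insert k J) (B(k := w)) = adjoin (span J B) (vadd (vscale (v k) w) L)"
    and "lincomb (insert k J) v (B(k := w)) = vadd (vscale (v k) w) L" if w: "w \<in> vecs" for w
    using span_insert_fun_upd[OF J BJ w] lincomb_insert_fun_upd[OF J v(1) BJ w]
      adjoin_affine[OF SB L(1) w vk v(2)]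
    by (simp_all add: L_def)
  then have "(\<Sum>w\<in>vecs. if card (span (insert k J) (B(k := w))) = q ^ r
                      then \<psi> (dot u (lincomb (insert k J) v (B(k := w)))) else 0) =
      (\<Sum>w\<in>vecs. (\<lambda>y. if card (adjoin (span J B) y) = q ^ r then \<psi> (dot u y) else 0) (vadd (vscale (v k) w) L))"
    by (intro sum.cong) auto
  also have "\<dots> = (\<Sum>y\<in>vecs. if card (adjoin (span J B) y) = q ^ r then \<psi> (dot u y) else 0)"
    using sum.reindex_bij_betw[OF bij_betw_affine[OF vk v(2) L(2)]] .
  also have "\<dots> = (if span J B \<subseteq> perp u
                    then of_nat (if card (span J B) = q ^ r then q ^ r else 0) -
                         of_nat (case r of 0 \<Rightarrow> 0 | Suc s \<Rightarrow> if card (span J B) = q ^ s then q ^ s else 0)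
                    else 0)"
    by (rule sum_char_adjoin[OF \<psi> u SB])
  finally show ?thesis
    using span_subset_iff_PiE[OF J(1) B subspace_perp[OF u(1)]] by simp
qed

lemma sum_families_rank_weights:
  assumes W: "subspace W" "card W = q ^ d" and J: "finite J"
  shows "(\<Sum>B\<in>J \<rightarrow>\<^sub>E W. of_nat (if card (span J B) = q ^ r then q ^ r else 0) -
            of_nat (case r of 0 \<Rightarrow> 0 | Suc s \<Rightarrow> if card (span J B) = q ^ s then q ^ s else 0)) =
         (of_nat (q ^ r * rank_tuples q d (card J) r) :: 'b :: ring_1) -
         of_nat (case r of 0 \<Rightarrow> 0 | Suc s \<Rightarrow> q ^ s * rank_tuples q d (card J) s)"
proof -
  have fin: "finite (J \<rightarrow>\<^sub>E W)"
    using J finite_subspace[OF W(1)] by (simp add: finite_PiE)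
  have "(\<Sum>B\<in>J \<rightarrow>\<^sub>E W. if card (span J B) = q ^ r then q ^ r else 0) = q ^ r * rank_tuples q d (card J) r"
    using fin card_families_rank[OF W J] by (simp add: sum_if_const)
  moreover have "(\<Sum>B\<in>J \<rightarrow>\<^sub>E W. case r of 0 \<Rightarrow> 0 | Suc s \<Rightarrow> if card (span J B) = q ^ s then q ^ s else 0) =
                   (case r of 0 \<Rightarrow> 0 | Suc s \<Rightarrow> q ^ s * rank_tuples q d (card J) s)"
    using fin card_families_rank[OF W J] by (cases r) (simp_all add: sum_if_const)
  ultimately show ?thesis
    by (simp add: sum_subtractf flip: of_nat_sum)
qed

lemma sum_char_rank_families:
  assumes \<psi>: "nontriv_add_char F \<psi>" and u: "u \<in> vecs" "u \<noteq> vzero"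
    and v: "v \<in> {..<m} \<rightarrow> carrier F" and k: "k < m" "v k \<noteq> \<zero>"
  shows "(\<Sum>A\<in>{..<m} \<rightarrow>\<^sub>E vecs. if card (span {..<m} A) = q ^ r then \<psi> (dot u (lincomb {..<m} v A)) else 0) =
           of_nat (q ^ r * rank_tuples q (a - 1) (m - 1) r) -
           of_nat (case r of 0 \<Rightarrow> 0 | Suc s \<Rightarrow> q ^ s * rank_tuples q (a - 1) (m - 1) s)"
proof -
  define J where "J = {..<m} - {k}"
  have m: "{..<m} = insert k J" and J: "finite J" "k \<notin> J" "card J = m - 1"
    using k by (auto simp: J_def)
  have vI: "v \<in> insert k J \<rightarrow> carrier F"
    using v m by simp
  have P: "subspace (perp u)" "card (perp u) = q ^ (a - 1)"
    using subspace_perp card_perp u by auto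
  have "J \<rightarrow>\<^sub>E perp u \<subseteq> J \<rightarrow>\<^sub>E vecs"
    using subspaceD(1)[OF P(1)] by (auto intro: PiE_mono)
  then have restrict: "{B \<in> J \<rightarrow>\<^sub>E vecs. B \<in> J \<rightarrow>\<^sub>E perp u} = J \<rightarrow>\<^sub>E perp u"
    by blast
  have "(\<Sum>A\<in>{..<m} \<rightarrow>\<^sub>E vecs. if card (span {..<m} A) = q ^ r then \<psi> (dot u (lincomb {..<m} v A)) else 0) =
        (\<Sum>B\<in>J \<rightarrow>\<^sub>E vecs. \<Sum>w\<in>vecs. if card (span (insert k J) (B(k := w))) = q ^ r
                                  then \<psi> (dot u (lincomb (insert k J) v (B(k := w)))) else 0)"
    unfolding m by (rule sum_PiE_insert[OF J(2)])
  also have "\<dots> = (\<Sum>B\<in>J \<rightarrow>\<^sub>E perp u.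
                     of_nat (if card (span J B) = q ^ r then q ^ r else 0) -
                     of_nat (case r of 0 \<Rightarrow> 0 | Suc s \<Rightarrow> if card (span J B) = q ^ s then q ^ s else 0))"
    using sum_char_extensions[OF \<psi> u J(1,2) vI k(2)] J(1) finite_vecs restrict
    by (simp add: m sum.inter_filter[symmetric] finite_PiE cong: sum.cong)
  also have "\<dots> = of_nat (q ^ r * rank_tuples q (a - 1) (m - 1) r) -
                  of_nat (case r of 0 \<Rightarrow> 0 | Suc s \<Rightarrow> q ^ s * rank_tuples q (a - 1) (m - 1) s)"
    using sum_families_rank_weights[OF P J(1), where 'b = complex, unfolded J(3)] .
  finally show ?thesis .
qed

lemma fourier_orbit_rank_one:
  assumes \<psi>: "nontriv_add_char F \<psi>" and T: "T \<in> matrices F a m" "mat_rank F a m T = 1"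
    and r: "r < a" "a \<le> m"
  shows "fourier_orbit F \<psi> a m r T = of_nat (rank_one_transform q (a - 1) (m - 1) r)"
proof -
  obtain u v k where u: "u \<in> vecs" "u \<noteq> vzero" and v: "v \<in> {..<m} \<rightarrow> carrier F"
    and k: "k < m" "v k \<noteq> \<zero>" and Tuv: "\<And>i j. i < a \<Longrightarrow> j < m \<Longrightarrow> T i j = v j \<otimes> u i"
    using rank_one_factor[OF T] by blast
  have "fourier_orbit F \<psi> a m r T = (\<Sum>M\<in>rank_orbit F a m r. \<psi> (dot u (lincomb {..<m} v (columns m M))))"
    unfolding fourier_orbit_def using trace_tA_rank_one[OF Tuv u(1) v]
    by (intro sum.cong) (auto simp: rank_orbit_def)
  also have "\<dots> = (\<Sum>A\<in>{..<m} \<rightarrow>\<^sub>E vecs.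
                      if card (span {..<m} A) = q ^ r then \<psi> (dot u (lincomb {..<m} v A)) else 0)"
    by (rule sum_rank_orbit)
  also have "\<dots> = of_nat (q ^ r * rank_tuples q (a - 1) (m - 1) r) -
                  of_nat (case r of 0 \<Rightarrow> 0 | Suc s \<Rightarrow> q ^ s * rank_tuples q (a - 1) (m - 1) s)"
    by (rule sum_char_rank_families[OF \<psi> u v k])
  also have "\<dots> = of_nat (rank_one_transform q (a - 1) (m - 1) r)"
    using card_carrier_ge_2 r by (intro of_nat_rank_one_transform[symmetric]) auto
  finally show ?thesis .
qed

end

lemma finite_coord_spaceI: "field F \<Longrightarrow> finite (carrier F) \<Longrightarrow> finite_coord_space F"
  by (simp add: finite_coord_space_def finite_coord_space_axioms_def)

lemma fourier_orbit_rank_one_pos: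
  assumes "r < a" "a \<le> m"
  shows "\<forall>(F :: nat ring) \<psi> T.
           field F \<and> finite (carrier F) \<and> nontriv_add_char F \<psi> \<and>
           T \<in> matrices F a m \<and> mat_rank F a m T = 1
           \<longrightarrow> (\<exists>k::nat. k > 0 \<and> fourier_orbit F \<psi> a m r T = of_nat k)"
proof (intro allI impI)
  fix F :: "nat ring" and \<psi> T
  assume h: "field F \<and> finite (carrier F) \<and> nontriv_add_char F \<psi> \<and>
    T \<in> matrices F a m \<and> mat_rank F a m T = 1"
  then interpret finite_coord_space F a
    by (intro finite_coord_spaceI) auto
  have "0 < rank_one_transform q (a - 1) (m - 1) r"
    using assms by (intro rank_one_transform_pos card_carrier_ge_2) auto
  then show "\<exists>k::nat. k > 0 \<and> fourier_orbit F \<psi> a m r T = of_nat k"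
    using h assms fourier_orbit_rank_one by blast
qed

lemma fourier_orbit_rank_one_asymp:
  assumes r: "r < a" "a \<le> m"
  shows "\<forall>\<epsilon>>0. \<exists>Q::nat. \<forall>(F :: nat ring) \<psi> T.
           field F \<and> finite (carrier F) \<and> card (carrier F) \<ge> Q \<and> nontriv_add_char F \<psi> \<and>
           T \<in> matrices F a m \<and> mat_rank F a m T = 1
           \<longrightarrow> cmod (fourier_orbit F \<psi> a m r T
                     - of_real (real (card (rank_orbit F a m r)) / real (card (carrier F)) ^ r))
               \<le> \<epsilon> * real (card (rank_orbit F a m r)) / real (card (carrier F)) ^ r"
proof (intro allI impI)
  fix \<epsilon> :: real assume "0 < \<epsilon>"
  have d: "r \<le> a - 1" "a - 1 \<le> m - 1" and a: "Suc (a - 1) = a" "Suc (m - 1) = m"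
    using r by auto
  obtain Q where Q: "\<And>q. Q \<le> q \<Longrightarrow>
      \<bar>real (rank_one_transform q (a - 1) (m - 1) r) - real (rank_tuples q a m r) / real q ^ r\<bar>
        \<le> \<epsilon> * (real (rank_tuples q a m r) / real q ^ r)"
    using rank_one_transform_rel_error[OF d \<open>0 < \<epsilon>\<close>] unfolding a by blast
  show "\<exists>Q. \<forall>F \<psi> T. field F \<and> finite (carrier F) \<and> Q \<le> card (carrier F) \<and> nontriv_add_char F \<psi> \<and>
    T \<in> matrices F a m \<and> mat_rank F a m T = 1 \<longrightarrow>
    cmod (fourier_orbit F \<psi> a m r T - of_real (real (card (rank_orbit F a m r)) / real (card (carrier F)) ^ r))
      \<le> \<epsilon> * real (card (rank_orbit F a m r)) / real (card (carrier F)) ^ r"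
  proof (intro exI[of _ Q] allI impI)
    fix F :: "nat ring" and \<psi> T
    assume h: "field F \<and> finite (carrier F) \<and> Q \<le> card (carrier F) \<and> nontriv_add_char F \<psi> \<and>
      T \<in> matrices F a m \<and> mat_rank F a m T = 1"
    then interpret finite_coord_space F a
      by (intro finite_coord_spaceI) auto
    have "fourier_orbit F \<psi> a m r T - of_real (real (card (rank_orbit F a m r)) / real q ^ r) =
            of_real (real (rank_one_transform q (a - 1) (m - 1) r) - real (rank_tuples q a m r) / real q ^ r)"
      using h r by (simp add: fourier_orbit_rank_one card_rank_orbit)
    then have "cmod (fourier_orbit F \<psi> a m r T - of_real (real (card (rank_orbit F a m r)) / real q ^ r)) =
            \<bar>real (rank_one_transform q (a - 1) (m - 1) r) - real (rank_tuples q a m r) / real q ^ r\<bar>"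
      by (simp only: norm_of_real)
    also have "\<dots> \<le> \<epsilon> * real (card (rank_orbit F a m r)) / real q ^ r"
      using Q[of q] h by (simp add: card_rank_orbit)
    finally show "cmod (fourier_orbit F \<psi> a m r T
                 - of_real (real (card (rank_orbit F a m r)) / real q ^ r))
               \<le> \<epsilon> * real (card (rank_orbit F a m r)) / real q ^ r" .
  qed
qed

theorem fact8p2:
  fixes n r :: nat
  assumes "r < n div 2"
  shows "(\<forall>(F :: nat ring) \<psi> T.
            field F \<and> finite (carrier F) \<and> nontriv_add_char F \<psi> \<and>
            T \<in> matrices F (n div 2) (n - n div 2) \<and> mat_rank F (n div 2) (n - n div 2) T = 1
            \<longrightarrow> (\<exists>k::nat. k > 0 \<and> fourier_orbit F \<psi> (n div 2) (n - n div 2) r T = of_nat k))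
       \<and> (\<forall>\<epsilon>>0. \<exists>Q::nat. \<forall>(F :: nat ring) \<psi> T.
            field F \<and> finite (carrier F) \<and> card (carrier F) \<ge> Q \<and> nontriv_add_char F \<psi> \<and>
            T \<in> matrices F (n div 2) (n - n div 2) \<and> mat_rank F (n div 2) (n - n div 2) T = 1
            \<longrightarrow> cmod (fourier_orbit F \<psi> (n div 2) (n - n div 2) r T
                      - of_real (real (card (rank_orbit F (n div 2) (n - n div 2) r))
                                 / real (card (carrier F)) ^ r))
                \<le> \<epsilon> * real (card (rank_orbit F (n div 2) (n - n div 2) r))
                      / real (card (carrier F)) ^ r)"
proof -
  have dims: "r < n div 2" "n div 2 \<le> n - n div 2"
    using assms by auto
  show ?thesis
    using fourier_orbit_rank_one_pos[OF dims] fourier_orbit_rank_one_asymp[OF dims] by (rule conjI)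
qed

end
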